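(* Let $C\subset\mathbb R^3$ be a non-closed embedded curve of length $l>0$ with nowhere vanishing curvature and orientation-compatible arc-length parametrization $\mathbf c:[-l/2,l/2]\to\mathbb R^3$, and suppose $C$ does not lie in any plane. Let $F\in\mathcal D_*(C)$ be a normal form with $F(s,0)=\mathbf c(s)$. Then $F(\Omega_\epsilon)$ is congruent to $F_*(\Omega_\epsilon)$ for sufficiently small $\epsilon>0$ if and only if $C$ has a positive symmetry.
   Context: $-C$ is $C$ with the opposite orientation; $\kappa$ is the curvature of $\mathbf c$; $\Omega_\epsilon=[-l/2,l/2]\times(-\epsilon,\epsilon)$. "$F(\Omega_\epsilon)$ congruent to $G(\Omega_\epsilon)$ for sufficiently small $\epsilon$" means there exist an isometry $T$ of $\mathbb R^3$ and $\epsilon_0>0$ with $T(F(\Omega_\epsilon))=G(\Omega_\epsilon)$ for all $0<\epsilon<\epsilon_0$. A developable strip along $C$ is the germ of a $C^\infty$ embedding $f(u,v)=f(u,0)+v\,\xi_f(u)$ with $\mathbf c_f(u)=f(u,0)$ parametrizing $C$, $\xi_f$ unit, and zero Gaussian curvature; with the Frenet frame $(\mathbf e,\mathbf n,\mathbf b)$ of $\mathbf c_f$ write $\xi_f=\cos\beta_f\,\mathbf e+\sin\beta_f(\cos\alpha_f\,\mathbf n+\sin\alpha_f\,\mathbf b)$. $\mathcal D(C)$: strips with $\mathbf c_f$ inducing the orientation of $C$ and $0<|\cos\alpha_f|<1$, normalized by $0<|\alpha_f|<\pi/2$ (first angular function), $0<\beta_f<\pi$. Geodesic curvature $\mu_f=\kappa_f\cos\alpha_f$;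 admissible ($\in\mathcal D_*(C)$) if $\mu_f<\min\kappa_f$ everywhere. A normal form is such a strip $F(s,v)$ defined near $[-l/2,l/2]\times\{0\}$ with $s\mapsto F(s,0)$ an arc-length parametrization of $C$ (either orientation); it is determined by that parametrization and its first angular function. Inverse: $F_*\in\mathcal D_*(-C)$ is the normal form with $F_*(s,0)=\mathbf c(-s)$ whose first angular function (w.r.t. the Frenet frame of $s\mapsto\mathbf c(-s)$) has the same sign as $\alpha_F(s)$ and satisfies $\kappa(-s)\cos\alpha_{F_*}(s)=\kappa(s)\cos\alpha_F(s)$. A positive symmetry of $C$ is an orientation-preserving isometry $T\ne\mathrm{id}$ of $\mathbb R^3$ with $T(C)=C$. *)

theory Defs
  imports "HOL-Analysis.Analysis"
begin

unbundle no cross3_syntax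
unbundle set_product_syntax

(* Derivative of a curve (total function real => vector; only its values near the
   parameter interval matter). *)
definition vd :: "(real \<Rightarrow> 'a::real_normed_vector) \<Rightarrow> real \<Rightarrow> 'a" where
  "vd \<gamma> = (\<lambda>s. vector_derivative \<gamma> (at s))"

definition smooth_curve_on :: "real set \<Rightarrow> (real \<Rightarrow> real^3) \<Rightarrow> bool" where
  "smooth_curve_on U \<gamma> \<longleftrightarrow> (\<forall>k. \<forall>s\<in>U. ((vd ^^ k) \<gamma>) differentiable (at s))"

definition curvature :: "(real \<Rightarrow> real^3) \<Rightarrow> real \<Rightarrow> real" where
  "curvature \<gamma> s = norm (vd (vd \<gamma>) s)"

definition frenet_e :: "(real \<Rightarrow> real^3) \<Rightarrow> real \<Rightarrow> real^3" where
  "frenet_e \<gamma> s = vd \<gamma> s"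

definition frenet_n :: "(real \<Rightarrow> real^3) \<Rightarrow> real \<Rightarrow> real^3" where
  "frenet_n \<gamma> s = (1 / curvature \<gamma> s) *\<^sub>R vd (vd \<gamma>) s"

definition frenet_b :: "(real \<Rightarrow> real^3) \<Rightarrow> real \<Rightarrow> real^3" where
  "frenet_b \<gamma> s = cross3 (frenet_e \<gamma> s) (frenet_n \<gamma> s)"

definition ruling :: "(real \<Rightarrow> real^3) \<Rightarrow> (real \<Rightarrow> real) \<Rightarrow> (real \<Rightarrow> real) \<Rightarrow> real \<Rightarrow> real^3" where
  "ruling \<gamma> \<alpha> \<beta> s = cos (\<beta> s) *\<^sub>R frenet_e \<gamma> s
      + sin (\<beta> s) *\<^sub>R (cos (\<alpha> s) *\<^sub>R frenet_n \<gamma> s + sin (\<alpha> s) *\<^sub>R frenet_b \<gamma> s)"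

definition pd_s :: "(real \<times> real \<Rightarrow> real^3) \<Rightarrow> real \<times> real \<Rightarrow> real^3" where
  "pd_s F = (\<lambda>(s,v). vector_derivative (\<lambda>t. F (t,v)) (at s))"

definition pd_v :: "(real \<times> real \<Rightarrow> real^3) \<Rightarrow> real \<times> real \<Rightarrow> real^3" where
  "pd_v F = (\<lambda>(s,v). vector_derivative (\<lambda>t. F (s,t)) (at v))"

definition iter_pd :: "bool list \<Rightarrow> (real \<times> real \<Rightarrow> real^3) \<Rightarrow> real \<times> real \<Rightarrow> real^3" where
  "iter_pd ws F = foldr (\<lambda>b H. if b then pd_s H else pd_v H) ws F"

definition smooth_surface_on :: "(real \<times> real) set \<Rightarrow> (real \<times> real \<Rightarrow> real^3) \<Rightarrow> bool" where
  "smooth_surface_on U F \<longleftrightarrow>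
     (\<forall>ws. continuous_on U (iter_pd ws F) \<and>
        (\<forall>(s,v)\<in>U. (\<lambda>t. iter_pd ws F (t,v)) differentiable (at s)
                 \<and> (\<lambda>t. iter_pd ws F (s,t)) differentiable (at v)))"

(* Gaussian curvature K = (LN - M^2)/(EG - F^2), written with X = F_s \<times> F_v *)
definition gauss_curv :: "(real \<times> real \<Rightarrow> real^3) \<Rightarrow> real \<times> real \<Rightarrow> real" where
  "gauss_curv F p =
     (let X = cross3 (pd_s F p) (pd_v F p)
      in ((pd_s (pd_s F) p \<bullet> X) * (pd_v (pd_v F) p \<bullet> X) - (pd_v (pd_s F) p \<bullet> X)^2) / norm X ^ 4)"

definition param_int :: "real \<Rightarrow> real set" where
  "param_int l = {-l/2..l/2}"

(* F is a normal form (a developable strip in D(C)) along the arc-length parametrization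
   gamma on [-l/2,l/2], with first angular function alpha: F is (the germ of) a smooth
   embedding of an open neighbourhood U of [-l/2,l/2]x{0}, of the form
   F(s,v) = gamma(s) + v xi(s), with zero Gaussian curvature. *)
definition normal_form :: "(real \<Rightarrow> real^3) \<Rightarrow> real \<Rightarrow> (real \<Rightarrow> real) \<Rightarrow> (real \<times> real \<Rightarrow> real^3) \<Rightarrow> bool" where
  "normal_form \<gamma> l \<alpha> F \<longleftrightarrow>
     (\<exists>\<beta> U. open U \<and> param_int l \<times> {0} \<subseteq> U \<and> smooth_surface_on U F
        \<and> inj_on F U \<and> continuous_on (F ` U) (inv_into U F)
        \<and> (\<forall>p\<in>U. cross3 (pd_s F p) (pd_v F p) \<noteq> 0)
        \<and> (\<forall>p\<in>U. gauss_curv F p = 0)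
        \<and> (\<forall>(s,v)\<in>U. F (s,v) = \<gamma> s + v *\<^sub>R ruling \<gamma> \<alpha> \<beta> s)
        \<and> (\<forall>s\<in>param_int l. 0 < \<bar>\<alpha> s\<bar> \<and> \<bar>\<alpha> s\<bar> < pi/2 \<and> 0 < \<beta> s \<and> \<beta> s < pi))"

(* admissibility: geodesic curvature mu = kappa cos alpha < min kappa everywhere *)
definition admissible :: "(real \<Rightarrow> real^3) \<Rightarrow> real \<Rightarrow> (real \<Rightarrow> real) \<Rightarrow> bool" where
  "admissible \<gamma> l \<alpha> \<longleftrightarrow>
     (\<forall>s\<in>param_int l. curvature \<gamma> s * cos (\<alpha> s) < Inf (curvature \<gamma> ` param_int l))"

definition isometry3 :: "(real^3 \<Rightarrow> real^3) \<Rightarrow> bool" where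
  "isometry3 T \<longleftrightarrow> (\<forall>x y. dist (T x) (T y) = dist x y)"

definition Omega :: "real \<Rightarrow> real \<Rightarrow> (real \<times> real) set" where
  "Omega l \<epsilon> = param_int l \<times> {-\<epsilon><..<\<epsilon>}"

definition congruent_small :: "real \<Rightarrow> (real \<times> real \<Rightarrow> real^3) \<Rightarrow> (real \<times> real \<Rightarrow> real^3) \<Rightarrow> bool" where
  "congruent_small l F G \<longleftrightarrow>
     (\<exists>T \<epsilon>0. isometry3 T \<and> \<epsilon>0 > 0 \<and>
        (\<forall>\<epsilon>. 0 < \<epsilon> \<and> \<epsilon> < \<epsilon>0 \<longrightarrow> T ` (F ` Omega l \<epsilon>) = G ` Omega l \<epsilon>))"

definition positive_symmetry :: "(real^3 \<Rightarrow> real^3) \<Rightarrow> (real^3) set \<Rightarrow> bool" where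
  "positive_symmetry T C \<longleftrightarrow>
     isometry3 T \<and> det (matrix (\<lambda>x. T x - T 0)) > 0 \<and> T \<noteq> id \<and> T ` C = C"

end

(*
  A congruence T(F(\<Omega>\<^sub>\<epsilon>)) = F\<^sub>*(\<Omega>\<^sub>\<epsilon>) for all small \<epsilon> forces T(C) = C, since C is the
  intersection of the strips. An isometry mapping a unit-speed embedded arc onto itself either
  fixes it pointwise or reverses it, and fixing a non-planar curve pointwise forces T = id.
  In both cases T fixes c(0), and the ruling of F\<^sub>* at c(0) must lie in the T-image of the
  tangent plane of F there. If the linear part of T fixes the normal and binormal at c(0)
  (T = id, or T reversing with determinant -1) this gives sin(\<alpha>(0) + \<alpha>\<^sub>*(0)) = 0, impossible
  because \<alpha> and \<alpha>\<^sub>* have the same sign and lie in (-\<pi>/2, \<pi>/2). So T is a positive symmetry.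

  Conversely, a positive symmetry reverses C and carries the Frenet frame of c to that of
  s \<mapsto> c(-s), whence \<alpha>\<^sub>* = \<alpha>. Both rulings then lie in one plane field along C; differentiating
  this coplanarity and using that both strips are developable gives \<beta>\<^sub>F = \<beta>\<^sub>*, so T \<circ> F = F\<^sub>*.
*)

theory Submission
  imports Defs
begin

section \<open>Derivatives of curves\<close>

lemma vd_eqI: "(g has_vector_derivative d) (at s) \<Longrightarrow> vd g s = d"
  unfolding vd_def by (rule vector_derivative_at)

lemma has_vector_derivative_vd: "g differentiable (at s) \<Longrightarrow> (g has_vector_derivative vd g s) (at s)"
  unfolding vd_def using vector_derivative_works by blast

lemma vd_cong_open:
  assumes "open S" "s \<in> S" "\<And>t. t \<in> S \<Longrightarrow> g t = h t"
  shows "vd g s = vd h s"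
proof -
  have "(g has_vector_derivative d) (at s) \<longleftrightarrow> (h has_vector_derivative d) (at s)" for d
    using has_vector_derivative_transform_within_open[of g d s S h]
      has_vector_derivative_transform_within_open[of h d s S g] assms by auto
  then show ?thesis unfolding vd_def vector_derivative_def by simp
qed

lemma has_vector_derivative_reflect:
  assumes "(g has_vector_derivative d) (at (-t))"
  shows "((\<lambda>s. g (-s)) has_vector_derivative - d) (at t)"
proof -
  have "((\<lambda>s. -s) has_vector_derivative (-1::real)) (at t)"
    by (auto intro!: derivative_eq_intros)
  from vector_diff_chain_at[OF this] assms show ?thesis by (simp add: o_def)
qed

lemma vd_reflect: "g differentiable (at (-t)) \<Longrightarrow> vd (\<lambda>s. g (-s)) t = - vd g (-t)"
  using has_vector_derivative_reflect[OF has_vector_derivative_vd] vd_eqI by blast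

lemma vd_vd_reflect:
  assumes "open U" "-t \<in> U" "\<And>s. s \<in> U \<Longrightarrow> g differentiable (at s)"
    and "vd g differentiable (at (-t))"
  shows "vd (vd (\<lambda>s. g (-s))) t = vd (vd g) (-t)"
proof -
  have "open (uminus ` U)" using assms(1) by (rule open_negations)
  moreover have "t \<in> uminus ` U" using assms(2) by force
  moreover have "vd (\<lambda>s. g (-s)) x = - vd g (-x)" if "x \<in> uminus ` U" for x
  proof -
    have "-x \<in> U" using that by force
    then show ?thesis using assms(3) vd_reflect by blast
  qed
  ultimately have "vd (vd (\<lambda>s. g (-s))) t = vd (\<lambda>s. - vd g (-s)) t"
    by (rule vd_cong_open)
  also have "\<dots> = vd (vd g) (-t)"
    using has_vector_derivative_minus[OF has_vector_derivative_reflect[OF has_vector_derivative_vd[OF assms(4)]]]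
    by (simp add: vd_eqI)
  finally show ?thesis .
qed

lemma vd_affine:
  fixes A :: "'a::euclidean_space \<Rightarrow> 'b::euclidean_space"
  assumes "open S" "s \<in> S" "\<And>t. t \<in> S \<Longrightarrow> h t = A (g t) + b" "linear A"
    and "g differentiable (at s)"
  shows "vd h s = A (vd g s)"
proof -
  have "bounded_linear A" using assms(4) linear_conv_bounded_linear by blast
  from bounded_linear.has_vector_derivative[OF this has_vector_derivative_vd[OF assms(5)]]
  have "((\<lambda>t. A (g t) + b) has_vector_derivative A (vd g s) + 0) (at s)"
    by (rule has_vector_derivative_add) simp
  then have "vd (\<lambda>t. A (g t) + b) s = A (vd g s)" by (simp add: vd_eqI)
  moreover have "vd h s = vd (\<lambda>t. A (g t) + b) s"
    by (rule vd_cong_open[OF assms(1,2)]) (rule assms(3))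
  ultimately show ?thesis by simp
qed

lemma inner_vd_eq_0_if_unit:
  fixes g :: "real \<Rightarrow> 'a::real_inner"
  assumes "open S" "s \<in> S" "\<And>t. t \<in> S \<Longrightarrow> norm (g t) = 1" "g differentiable (at s)"
  shows "g s \<bullet> vd g s = 0"
proof -
  have "((\<lambda>t. g t \<bullet> g t) has_vector_derivative (g s \<bullet> vd g s + vd g s \<bullet> g s)) (at s)"
    using bounded_bilinear.has_vector_derivative[OF bounded_bilinear_inner
        has_vector_derivative_vd[OF assms(4)] has_vector_derivative_vd[OF assms(4)]] by simp
  moreover have "((\<lambda>t. g t \<bullet> g t) has_vector_derivative 0) (at s)"
    by (rule has_vector_derivative_transform_within_open[of "\<lambda>t. 1" _ _ S, OF _ assms(1,2)])
       (use assms(3) in \<open>simp_all add: dot_square_norm\<close>)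
  ultimately have "g s \<bullet> vd g s + vd g s \<bullet> g s = 0" by (rule vector_derivative_unique_at)
  then show ?thesis by (simp add: inner_commute)
qed

lemma unit_speed_chord_ratio_tendsto_1:
  fixes c :: "real \<Rightarrow> 'a::real_normed_vector"
  assumes "(c has_vector_derivative d) (at s)" "norm d = 1"
  shows "((\<lambda>t. norm (c t - c s) / \<bar>t - s\<bar>) \<longlongrightarrow> 1) (at s within S)"
proof -
  have lim: "((\<lambda>t. norm (c t - c s - (t - s) *\<^sub>R d) / \<bar>t - s\<bar>) \<longlongrightarrow> 0) (at s)"
    using assms(1) unfolding has_vector_derivative_def has_derivative_iff_norm by simp
  have "\<forall>\<^sub>F t in at s. norm (norm (c t - c s) / \<bar>t - s\<bar> - 1) \<le> norm (c t - c s - (t - s) *\<^sub>R d) / \<bar>t - s\<bar>"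
    unfolding eventually_at_filter
  proof (rule always_eventually, intro allI impI)
    fix t assume "t \<noteq> s"
    have "norm ((t - s) *\<^sub>R d) = \<bar>t - s\<bar>" using assms(2) by simp
    with \<open>t \<noteq> s\<close> have "norm (norm (c t - c s) / \<bar>t - s\<bar> - 1) = \<bar>norm (c t - c s) - norm ((t - s) *\<^sub>R d)\<bar> / \<bar>t - s\<bar>"
      by (simp add: field_simps)
    also have "\<dots> \<le> norm (c t - c s - (t - s) *\<^sub>R d) / \<bar>t - s\<bar>"
      by (intro divide_right_mono norm_triangle_ineq3) auto
    finally show "norm (norm (c t - c s) / \<bar>t - s\<bar> - 1) \<le> norm (c t - c s - (t - s) *\<^sub>R d) / \<bar>t - s\<bar>" .
  qed
  from Lim_null_comparison[OF this lim]
  have "((\<lambda>t. norm (c t - c s) / \<bar>t - s\<bar> - 1) \<longlongrightarrow> 0) (at s)" .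
  then have "((\<lambda>t. norm (c t - c s) / \<bar>t - s\<bar>) \<longlongrightarrow> 1) (at s)"
    using LIM_zero_iff by blast
  then show ?thesis by (rule tendsto_mono[OF at_le, rotated]) simp
qed

section \<open>Isometries mapping an arc onto itself\<close>

lemma dist_preserving_continuous_on: "(\<And>x y. dist (T x) (T y) = dist x y) \<Longrightarrow> continuous_on S T"
  unfolding continuous_on_iff by metis

lemma isometry3_orthogonal_transformation:
  "isometry3 T \<Longrightarrow> orthogonal_transformation (\<lambda>x. T x - T 0)"
  unfolding isometry3_def orthogonal_transformation_isometry by (simp add: dist_norm)

lemma strict_mono_on_slope_tendsto_1_imp_derivative:
  fixes \<phi> :: "real \<Rightarrow> real"
  assumes mono: "strict_mono_on I \<phi>" and x: "x \<in> I"
    and slope: "((\<lambda>t. \<bar>\<phi> t - \<phi> x\<bar> / \<bar>t - x\<bar>) \<longlongrightarrow> 1) (at x within I)"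
  shows "(\<phi> has_field_derivative 1) (at x within I)"
proof -
  have "\<forall>\<^sub>F t in at x within I. \<bar>\<phi> t - \<phi> x\<bar> / \<bar>t - x\<bar> = (\<phi> t - \<phi> x) / (t - x)"
    unfolding eventually_at_filter
  proof (rule always_eventually, intro allI impI)
    fix t assume t: "t \<noteq> x" "t \<in> I"
    have "0 < (\<phi> t - \<phi> x) / (t - x)"
    proof (cases "t < x")
      case True
      then have "\<phi> t < \<phi> x" using mono t x by (auto simp: strict_mono_on_def)
      with True show ?thesis by (simp add: divide_neg_neg)
    next
      case False
      then have "x < t" using t by simp
      moreover from this have "\<phi> x < \<phi> t" using mono t x by (auto simp: strict_mono_on_def)
      ultimately show ?thesis by simp
    qed
    then show "\<bar>\<phi> t - \<phi> x\<bar> / \<bar>t - x\<bar> = (\<phi> t - \<phi> x) / (t - x)"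
      by (metis abs_divide abs_of_pos)
  qed
  with slope show ?thesis
    unfolding has_field_derivative_iff by (rule Lim_transform_eventually)
qed

lemma strict_mono_on_self_map_slope_1_eq_id:
  fixes \<phi> :: "real \<Rightarrow> real"
  assumes mono: "strict_mono_on {a..b} \<phi>" and onto: "\<phi> ` {a..b} = {a..b}"
    and slope: "\<And>s. s \<in> {a..b} \<Longrightarrow> ((\<lambda>t. \<bar>\<phi> t - \<phi> s\<bar> / \<bar>t - s\<bar>) \<longlongrightarrow> 1) (at s within {a..b})"
    and s: "s \<in> {a..b}"
  shows "\<phi> s = s"
proof -
  have "((\<lambda>t. \<phi> t - t) has_field_derivative 1 - 1) (at x within {a..b})" if "x \<in> {a..b}" for x
    using strict_mono_on_slope_tendsto_1_imp_derivative[OF mono that slope[OF that]]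
    by (intro derivative_intros)
  then obtain k where k: "\<forall>x\<in>{a..b}. \<phi> x - x = k"
    using has_field_derivative_zero_constant[of "{a..b}" "\<lambda>t. \<phi> t - t"] by auto
  have a: "a \<in> {a..b}" using s by simp
  then obtain t0 where t0: "t0 \<in> {a..b}" "\<phi> t0 = a" using onto by (metis imageE)
  have "\<phi> a = a"
  proof (rule ccontr)
    assume "\<phi> a \<noteq> a"
    then have "t0 \<noteq> a" using t0(2) by blast
    then have "a < t0" using t0(1) by simp
    then have "\<phi> a < \<phi> t0" using mono t0(1) a unfolding strict_mono_on_def by blast
    then have "\<phi> a < a" using t0(2) by simp
    moreover have "\<phi> a \<in> {a..b}" using onto a by blast
    ultimately show False by simp
  qed
  then have "k = 0" using k a by force
  then show ?thesis using k s by simp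
qed

lemma chord_preserving_self_map_slope_tendsto_1:
  fixes c :: "real \<Rightarrow> 'a::real_normed_vector" and \<phi> :: "real \<Rightarrow> real"
  assumes der: "\<And>s. s \<in> I \<Longrightarrow> (c has_vector_derivative c' s) (at s)"
    and unit: "\<And>s. s \<in> I \<Longrightarrow> norm (c' s) = 1"
    and inj: "inj_on c I"
    and cont: "continuous_on I \<phi>" and into: "\<phi> ` I \<subseteq> I"
    and chord: "\<And>s t. s \<in> I \<Longrightarrow> t \<in> I \<Longrightarrow> norm (c (\<phi> t) - c (\<phi> s)) = norm (c t - c s)"
    and s: "s \<in> I"
  shows "((\<lambda>t. \<bar>\<phi> t - \<phi> s\<bar> / \<bar>t - s\<bar>) \<longlongrightarrow> 1) (at s within I)"
proof -
  have c_ne: "c t \<noteq> c s" if "t \<in> I" "t \<noteq> s" for t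
    using inj_onD[OF inj _ that(1) s] that(2) by blast
  have \<phi>_ne: "\<phi> t \<noteq> \<phi> s" if "t \<in> I" "t \<noteq> s" for t
    using chord[OF s that(1)] c_ne[OF that] by auto
  have \<phi>s: "\<phi> s \<in> I" using into s by blast
  have "filterlim \<phi> (at (\<phi> s) within I) (at s within I)"
  proof (rule filterlim_at_withinI)
    show "(\<phi> \<longlongrightarrow> \<phi> s) (at s within I)"
      using cont s unfolding continuous_on_def by blast
    show "\<forall>\<^sub>F t in at s within I. \<phi> t \<in> I - {\<phi> s}"
      unfolding eventually_at_filter by (rule always_eventually) (use into \<phi>_ne in blast)
  qed
  from filterlim_compose[OF unit_speed_chord_ratio_tendsto_1[OF der[OF \<phi>s] unit[OF \<phi>s]] this]
  have "((\<lambda>t. norm (c (\<phi> t) - c (\<phi> s)) / \<bar>\<phi> t - \<phi> s\<bar>) \<longlongrightarrow> 1) (at s within I)" .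
  from tendsto_divide[OF unit_speed_chord_ratio_tendsto_1[OF der[OF s] unit[OF s]] this]
  have "((\<lambda>t. (norm (c t - c s) / \<bar>t - s\<bar>) / (norm (c (\<phi> t) - c (\<phi> s)) / \<bar>\<phi> t - \<phi> s\<bar>))
      \<longlongrightarrow> 1) (at s within I)" by simp
  moreover have "\<forall>\<^sub>F t in at s within I.
      (norm (c t - c s) / \<bar>t - s\<bar>) / (norm (c (\<phi> t) - c (\<phi> s)) / \<bar>\<phi> t - \<phi> s\<bar>) = \<bar>\<phi> t - \<phi> s\<bar> / \<bar>t - s\<bar>"
    unfolding eventually_at_filter
  proof (rule always_eventually, intro allI impI)
    fix t assume t: "t \<noteq> s" "t \<in> I"
    show "(norm (c t - c s) / \<bar>t - s\<bar>) / (norm (c (\<phi> t) - c (\<phi> s)) / \<bar>\<phi> t - \<phi> s\<bar>) = \<bar>\<phi> t - \<phi> s\<bar> / \<bar>t - s\<bar>"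
      unfolding chord[OF s t(2)] using c_ne[OF t(2,1)] \<phi>_ne[OF t(2,1)] t(1) by (simp add: field_simps)
  qed
  ultimately show ?thesis by (rule Lim_transform_eventually)
qed

lemma isometry_onto_arc_reparametrization:
  fixes c :: "real \<Rightarrow> 'a::euclidean_space"
  assumes "compact I" "continuous_on I c" "inj_on c I"
    and iso: "\<And>x y. dist (T x) (T y) = dist x y" and onto: "T ` c ` I = c ` I"
  obtains \<phi> where "\<phi> ` I = I" "inj_on \<phi> I" "continuous_on I \<phi>" "\<And>s. s \<in> I \<Longrightarrow> c (\<phi> s) = T (c s)"
proof -
  define \<phi> where "\<phi> s = inv_into I c (T (c s))" for s
  have Tc: "T (c s) \<in> c ` I" if "s \<in> I" for s using onto that by blast
  have \<phi>I: "\<phi> s \<in> I" and c\<phi>: "c (\<phi> s) = T (c s)" if "s \<in> I" for s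
    unfolding \<phi>_def using Tc[OF that] by (auto intro: inv_into_into f_inv_into_f)
  have "\<phi> ` I = I"
  proof (intro subset_antisym subsetI)
    fix t assume t: "t \<in> I"
    then have "c t \<in> (\<lambda>s. T (c s)) ` I" using onto unfolding image_image by blast
    then obtain s where s: "c t = T (c s)" "s \<in> I" by (rule imageE)
    then have "\<phi> s = t" using inj_onD[OF \<open>inj_on c I\<close>] c\<phi> \<phi>I t by metis
    then show "t \<in> \<phi> ` I" using s by blast
  qed (use \<phi>I in blast)
  moreover have "inj_on \<phi> I"
  proof (rule inj_onI)
    fix s t assume "s \<in> I" "t \<in> I" "\<phi> s = \<phi> t"
    then have "T (c s) = T (c t)" using c\<phi>[of s] c\<phi>[of t] by simp
    then have "dist (c s) (c t) = 0" using iso[of "c s" "c t"] by simp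
    then show "s = t" using inj_onD[OF \<open>inj_on c I\<close>] \<open>s \<in> I\<close> \<open>t \<in> I\<close> by simp
  qed
  moreover have "continuous_on (c ` I) (inv_into I c)"
    using continuous_on_inv[OF assms(2,1)] \<open>inj_on c I\<close> by (simp add: inv_into_f_f)
  then have "continuous_on I \<phi>"
    unfolding \<phi>_def
    by (rule continuous_on_compose2[OF _ continuous_on_compose2[OF dist_preserving_continuous_on[OF iso] assms(2)]])
       (use Tc in auto)
  ultimately show ?thesis using that c\<phi> by blast
qed

text \<open>The reparametrization \<open>\<phi>\<close> with \<open>c \<circ> \<phi> = T \<circ> c\<close> preserves chord lengths, so it has slope
  \<open>\<plusminus>1\<close>; a monotone self-map of \<open>{-L..L}\<close> of slope \<open>\<plusminus>1\<close> is \<open>id\<close> or \<open>uminus\<close>.\<close>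

lemma isometry_onto_unit_speed_arc_id_or_reflect:
  fixes c :: "real \<Rightarrow> 'a::euclidean_space"
  assumes der: "\<And>s. s \<in> {-L..L} \<Longrightarrow> (c has_vector_derivative c' s) (at s)"
    and unit: "\<And>s. s \<in> {-L..L} \<Longrightarrow> norm (c' s) = 1"
    and inj: "inj_on c {-L..L}"
    and iso: "\<And>x y. dist (T x) (T y) = dist x y"
    and onto: "T ` c ` {-L..L} = c ` {-L..L}"
  shows "(\<forall>s\<in>{-L..L}. T (c s) = c s) \<or> (\<forall>s\<in>{-L..L}. T (c s) = c (-s))"
proof -
  have "continuous_on {-L..L} c"
    by (rule continuous_on_vector_derivative) (use der has_vector_derivative_at_within in blast)
  then obtain \<phi> where \<phi>: "\<phi> ` {-L..L} = {-L..L}" "inj_on \<phi> {-L..L}" "continuous_on {-L..L} \<phi>"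
    and c\<phi>: "\<And>s. s \<in> {-L..L} \<Longrightarrow> c (\<phi> s) = T (c s)"
    using isometry_onto_arc_reparametrization[OF _ _ inj iso onto] by auto
  have "norm (c (\<phi> t) - c (\<phi> s)) = norm (c t - c s)" if "s \<in> {-L..L}" "t \<in> {-L..L}" for s t
    using iso[of "c t" "c s"] that by (simp add: c\<phi> dist_norm)
  then have slope: "((\<lambda>t. \<bar>\<phi> t - \<phi> s\<bar> / \<bar>t - s\<bar>) \<longlongrightarrow> 1) (at s within {-L..L})"
    if "s \<in> {-L..L}" for s
    using chord_preserving_self_map_slope_tendsto_1[OF der unit inj \<phi>(3)] \<phi>(1) that by blast
  have "strict_mono_on {-L..L} \<phi> \<or> strict_antimono_on {-L..L} \<phi>"
    using injective_eq_monotone_map[of "{-L..L}" \<phi>] \<phi>(2,3) by (simp add: is_interval_cc)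
  then show ?thesis
  proof
    assume "strict_mono_on {-L..L} \<phi>"
    then have "\<phi> s = s" if "s \<in> {-L..L}" for s
      using strict_mono_on_self_map_slope_1_eq_id \<phi>(1) slope that by blast
    then show ?thesis using c\<phi> by metis
  next
    assume anti: "strict_antimono_on {-L..L} \<phi>"
    have "strict_mono_on {-L..L} (\<lambda>s. - \<phi> s)"
      by (rule strict_mono_onI) (use monotone_onD[OF anti] in simp)
    moreover have "(\<lambda>s. - \<phi> s) ` {-L..L} = uminus ` \<phi> ` {-L..L}" by (simp add: image_image)
    then have "(\<lambda>s. - \<phi> s) ` {-L..L} = {-L..L}" unfolding \<phi>(1) by simp
    moreover have "((\<lambda>t. \<bar>- \<phi> t - - \<phi> s\<bar> / \<bar>t - s\<bar>) \<longlongrightarrow> 1) (at s within {-L..L})"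
      if "s \<in> {-L..L}" for s
      using slope[OF that] by (simp add: abs_minus_commute)
    ultimately have "- \<phi> s = s" if "s \<in> {-L..L}" for s
      using strict_mono_on_self_map_slope_1_eq_id[of "-L" L "\<lambda>s. - \<phi> s"] that by blast
    then show ?thesis using c\<phi> by (metis minus_minus)
  qed
qed

lemma isometry3_fixing_nonplanar_eq_id:
  fixes c :: "real \<Rightarrow> real^3"
  assumes nonplanar: "\<not> (\<exists>a d. a \<noteq> 0 \<and> (\<forall>s\<in>I. a \<bullet> c s = d))"
    and "0 \<in> I" and iso: "isometry3 T" and fixed: "\<And>s. s \<in> I \<Longrightarrow> T (c s) = c s"
  shows "T = id"
proof -
  define f where "f = (\<lambda>x. T x - T 0)"
  have "linear f"
    using isometry3_orthogonal_transformation[OF iso] by (simp add: f_def orthogonal_transformation_def)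
  define D where "D = (\<lambda>s. c s - c 0) ` I"
  have fD: "f x = x" if "x \<in> D" for x
  proof -
    obtain s where s: "s \<in> I" "x = c s - c 0" using \<open>x \<in> D\<close> unfolding D_def by blast
    then have "f x = f (c s) - f (c 0)" using linear_diff[OF \<open>linear f\<close>] by simp
    also have "\<dots> = c s - c 0" unfolding f_def using fixed s(1) \<open>0 \<in> I\<close> by simp
    finally show ?thesis using s(2) by simp
  qed
  have fixed_subspace: "subspace {x. f x = x}"
    unfolding subspace_def using linear_add[OF \<open>linear f\<close>] linear_cmul[OF \<open>linear f\<close>]
      linear_0[OF \<open>linear f\<close>] by auto
  then have span_fixed: "span D \<subseteq> {x. f x = x}" using span_minimal[OF _ fixed_subspace] fD by blast
  have "span D = UNIV"
  proof (rule ccontr)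
    assume "span D \<noteq> UNIV"
    then have "dim D < DIM(real^3)" using dim_eq_full dim_subset_UNIV[of D] by fastforce
    then obtain a :: "real^3" where a: "a \<noteq> 0" "\<And>y. y \<in> span D \<Longrightarrow> orthogonal a y"
      using orthogonal_to_subspace_exists by blast
    have "a \<bullet> c s = a \<bullet> c 0" if "s \<in> I" for s
    proof -
      have "c s - c 0 \<in> span D" using that unfolding D_def by (intro span_base) blast
      then have "a \<bullet> (c s - c 0) = 0" using a(2) by (simp add: orthogonal_def)
      then show ?thesis by (simp add: inner_diff_right)
    qed
    then show False using nonplanar a(1) by blast
  qed
  then have "f x = x" for x using span_fixed by blast
  moreover from this[of "c 0"] have "T 0 = 0" using fixed \<open>0 \<in> I\<close> by (simp add: f_def)
  ultimately show ?thesis by (auto simp: f_def fun_eq_iff)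
qed

section \<open>Points of a strip approaching a base point\<close>

lemma injective_unit_speed_linear_lower_bound:
  fixes c :: "real \<Rightarrow> 'a::real_normed_vector"
  assumes "compact I" "0 \<in> I" "continuous_on I c" "inj_on c I"
    and "(c has_vector_derivative d) (at 0)" "norm d = 1"
  obtains k where "k > 0" "\<And>s. s \<in> I \<Longrightarrow> k * \<bar>s\<bar> \<le> norm (c s - c 0)"
proof -
  define q where "q s = (if s = 0 then 1 else norm (c s - c 0) / \<bar>s\<bar>)" for s
  have "continuous (at x within I) q" if x: "x \<in> I" for x
  proof (cases "x = 0")
    case True
    have "((\<lambda>t. norm (c t - c 0) / \<bar>t - 0\<bar>) \<longlongrightarrow> q 0) (at 0 within I)"
      using unit_speed_chord_ratio_tendsto_1[OF assms(5,6)] by (simp add: q_def)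
    then have "(q \<longlongrightarrow> q 0) (at 0 within I)"
      by (rule Lim_transform_eventually) (simp add: eventually_at_filter q_def)
    then show ?thesis using True by (simp add: continuous_within)
  next
    case False
    have "continuous (at x within I) c"
      using assms(3) x continuous_on_eq_continuous_within by blast
    then have "continuous (at x within I) (\<lambda>t. norm (c t - c 0) / \<bar>t\<bar>)"
      using False by (intro continuous_intros) auto
    then have "((\<lambda>t. norm (c t - c 0) / \<bar>t\<bar>) \<longlongrightarrow> q x) (at x within I)"
      using False by (simp add: continuous_within q_def)
    moreover have "\<forall>\<^sub>F t in at x within I. t \<noteq> 0"
      unfolding eventually_at by (rule exI[of _ "\<bar>x\<bar>"]) (use False in \<open>auto simp: dist_real_def\<close>)
    then have "\<forall>\<^sub>F t in at x within I. norm (c t - c 0) / \<bar>t\<bar> = q t"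
      by eventually_elim (simp add: q_def)
    ultimately have "(q \<longlongrightarrow> q x) (at x within I)" by (rule Lim_transform_eventually)
    then show ?thesis by (simp add: continuous_within)
  qed
  then have "continuous_on I q" using continuous_on_eq_continuous_within by blast
  then obtain s0 where s0: "s0 \<in> I" "\<And>s. s \<in> I \<Longrightarrow> q s0 \<le> q s"
    using continuous_attains_inf[OF assms(1)] assms(2) by blast
  have "q s0 > 0"
  proof (cases "s0 = 0")
    case False
    then have "c s0 \<noteq> c 0" using inj_onD[OF assms(4) _ s0(1) assms(2)] by blast
    then show ?thesis using False by (simp add: q_def)
  qed (simp add: q_def)
  moreover have "q s0 * \<bar>s\<bar> \<le> norm (c s - c 0)" if "s \<in> I" for s
  proof (cases "s = 0")
    case False
    then show ?thesis using s0(2)[OF that] by (simp add: q_def field_simps)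
  qed simp
  ultimately show ?thesis using that by blast
qed

lemma has_vector_derivative_remainder_le:
  fixes c :: "real \<Rightarrow> 'a::real_normed_vector"
  assumes "(c has_vector_derivative d) (at x)" "r > 0"
  obtains \<delta> where "\<delta> > 0" "\<And>s. \<bar>s - x\<bar> < \<delta> \<Longrightarrow> norm (c s - c x - (s - x) *\<^sub>R d) \<le> r * \<bar>s - x\<bar>"
proof -
  have "((\<lambda>s. norm (c s - c x - (s - x) *\<^sub>R d) / \<bar>s - x\<bar>) \<longlongrightarrow> 0) (at x)"
    using assms(1) unfolding has_vector_derivative_def has_derivative_iff_norm by simp
  from tendstoD[OF this assms(2)] obtain \<delta> where \<delta>: "\<delta> > 0"
    "\<And>s. s \<noteq> x \<Longrightarrow> dist s x < \<delta> \<Longrightarrow> norm (c s - c x - (s - x) *\<^sub>R d) / \<bar>s - x\<bar> < r"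
    unfolding eventually_at by auto
  have "norm (c s - c x - (s - x) *\<^sub>R d) \<le> r * \<bar>s - x\<bar>" if "\<bar>s - x\<bar> < \<delta>" for s
  proof (cases "s = x")
    case False
    then show ?thesis using \<delta>(2)[OF False] that by (simp add: dist_real_def field_simps)
  qed simp
  with \<delta>(1) show ?thesis using that by blast
qed

lemma ruled_point_normal_component_le:
  fixes c \<xi> :: "real \<Rightarrow> 'a::real_inner"
  assumes der: "(c has_vector_derivative e) (at 0)" and cont: "continuous (at 0 within I) \<xi>"
    and normal: "M \<bullet> e = 0" "M \<bullet> \<xi> 0 = 0" and "r > 0"
  obtains \<delta> where "\<delta> > 0"
    "\<And>s w. s \<in> I \<Longrightarrow> \<bar>s\<bar> < \<delta> \<Longrightarrow> \<bar>(c s - c 0 + w *\<^sub>R \<xi> s) \<bullet> M\<bar> \<le> r * (\<bar>s\<bar> + \<bar>w\<bar>) * norm M"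
proof -
  obtain \<delta>1 where \<delta>1: "\<delta>1 > 0" "\<And>s. \<bar>s\<bar> < \<delta>1 \<Longrightarrow> norm (c s - c 0 - s *\<^sub>R e) \<le> r * \<bar>s\<bar>"
    using has_vector_derivative_remainder_le[OF der \<open>r > 0\<close>] by auto
  obtain \<delta>2 where \<delta>2: "\<delta>2 > 0" "\<And>s. s \<in> I \<Longrightarrow> \<bar>s\<bar> < \<delta>2 \<Longrightarrow> norm (\<xi> s - \<xi> 0) < r"
    using cont \<open>r > 0\<close> unfolding continuous_within_eps_delta by (metis dist_norm dist_real_def diff_zero)
  have "\<bar>(c s - c 0 + w *\<^sub>R \<xi> s) \<bullet> M\<bar> \<le> r * (\<bar>s\<bar> + \<bar>w\<bar>) * norm M"
    if s: "s \<in> I" "\<bar>s\<bar> < min \<delta>1 \<delta>2" for s w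
  proof -
    have "(c s - c 0 + w *\<^sub>R \<xi> s) \<bullet> M = (c s - c 0 - s *\<^sub>R e) \<bullet> M + w * ((\<xi> s - \<xi> 0) \<bullet> M)"
      using normal by (simp add: algebra_simps inner_commute)
    also have "\<bar>\<dots>\<bar> \<le> norm (c s - c 0 - s *\<^sub>R e) * norm M + \<bar>w\<bar> * (norm (\<xi> s - \<xi> 0) * norm M)"
      by (rule order_trans[OF abs_triangle_ineq])
         (auto simp: abs_mult intro!: add_mono mult_left_mono Cauchy_Schwarz_ineq2)
    also have "\<dots> \<le> (r * \<bar>s\<bar>) * norm M + \<bar>w\<bar> * (r * norm M)"
      using \<delta>1(2) \<delta>2(2)[OF s(1)] s(2)
      by (intro add_mono mult_right_mono mult_left_mono) auto
    finally show ?thesis by (simp add: algebra_simps)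
  qed
  then show ?thesis using that[of "min \<delta>1 \<delta>2"] \<delta>1(1) \<delta>2(1) by simp
qed

lemma eq_0_if_abs_le_all_pos_mult:
  fixes x K :: real
  assumes "\<And>r. r > 0 \<Longrightarrow> \<bar>x\<bar> \<le> r * K"
  shows "x = 0"
proof -
  have "((\<lambda>r. r * K) \<longlongrightarrow> 0 * K) (at_right 0)"
    by (intro tendsto_intros)
  moreover have "\<forall>\<^sub>F r in at_right 0. \<bar>x\<bar> \<le> r * K"
    using eventually_at_right_less by (rule eventually_mono) (rule assms)
  ultimately have "\<bar>x\<bar> \<le> 0 * K"
    by (intro tendsto_le[OF trivial_limit_at_right_real _ tendsto_const]) auto
  then show ?thesis by simp
qed

lemma approaching_parameter_le:
  fixes c \<xi> :: "real \<Rightarrow> 'a::euclidean_space"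
  assumes ot: "orthogonal_transformation A" and hit: "A (c s - c 0 + w *\<^sub>R \<xi> s) = v *\<^sub>R \<eta>"
    and "v \<ge> 0" "\<bar>w\<bar> \<le> 2 * v" "norm (\<xi> s) \<le> B" and lower: "k * \<bar>s\<bar> \<le> norm (c s - c 0)"
  shows "k * \<bar>s\<bar> \<le> v * (norm \<eta> + 2 * B)"
proof -
  define X where "X = c s - c 0 + w *\<^sub>R \<xi> s"
  have "norm X = v * norm \<eta>"
    using hit orthogonal_transformation_norm[OF ot, of X] \<open>v \<ge> 0\<close> by (simp add: X_def)
  have "k * \<bar>s\<bar> \<le> norm X + \<bar>w\<bar> * norm (\<xi> s)"
    using lower norm_triangle_ineq4[of X "w *\<^sub>R \<xi> s"] by (simp add: X_def)
  also have "\<dots> \<le> v * norm \<eta> + 2 * v * B"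
    using \<open>norm X = v * norm \<eta>\<close> mult_mono[OF assms(4,5)] \<open>v \<ge> 0\<close> by simp
  finally show ?thesis by (simp add: algebra_simps)
qed

text \<open>If the points \<open>c 0 + v \<eta>\<close> are, up to \<open>A\<close>, points \<open>c s + w \<xi> s\<close> of a strip with
  \<open>|w| \<le> 2v\<close>, then \<open>s = O(v)\<close>, and the first-order expansion at \<open>s = 0\<close> shows that the component of
  \<open>\<eta>\<close> along the image \<open>A M\<close> of the strip's normal \<open>M\<close> at \<open>c 0\<close> is \<open>o(1)\<close>, hence zero.\<close>

lemma ruling_in_tangent_plane_if_approached:
  fixes c \<xi> :: "real \<Rightarrow> 'a::euclidean_space"
  assumes ot: "orthogonal_transformation A" and "v0 > 0"
    and approach: "\<And>v. 0 < v \<Longrightarrow> v < v0 \<Longrightarrow>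
      \<exists>s\<in>I. \<exists>w. \<bar>w\<bar> \<le> 2 * v \<and> A (c s - c 0 + w *\<^sub>R \<xi> s) = v *\<^sub>R \<eta>"
    and der: "(c has_vector_derivative e) (at 0)" and cont: "continuous (at 0 within I) \<xi>"
    and normal: "M \<bullet> e = 0" "M \<bullet> \<xi> 0 = 0"
    and bound: "\<And>s. s \<in> I \<Longrightarrow> norm (\<xi> s) \<le> B"
    and lower: "k > 0" "\<And>s. s \<in> I \<Longrightarrow> k * \<bar>s\<bar> \<le> norm (c s - c 0)"
  shows "\<eta> \<bullet> A M = 0"
proof (rule eq_0_if_abs_le_all_pos_mult)
  define C where "C = \<bar>norm \<eta> + 2 * B\<bar>"
  have "C \<ge> 0" by (simp add: C_def)
  fix r :: real assume "r > 0"
  obtain \<delta> where \<delta>: "\<delta> > 0"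
    "\<And>s w. s \<in> I \<Longrightarrow> \<bar>s\<bar> < \<delta> \<Longrightarrow> \<bar>(c s - c 0 + w *\<^sub>R \<xi> s) \<bullet> M\<bar> \<le> r * (\<bar>s\<bar> + \<bar>w\<bar>) * norm M"
    using ruled_point_normal_component_le[OF der cont normal \<open>r > 0\<close>] by blast
  obtain v where v: "0 < v" "v < v0" "v < k * \<delta> / (C + 1)"
    using field_lbound_gt_zero[of v0 "k * \<delta> / (C + 1)"] \<open>v0 > 0\<close> lower(1) \<delta>(1)
    by (auto simp: C_def)
  then obtain s w where s: "s \<in> I" and w: "\<bar>w\<bar> \<le> 2 * v"
    and hit: "A (c s - c 0 + w *\<^sub>R \<xi> s) = v *\<^sub>R \<eta>"
    using approach by blast
  define X where "X = c s - c 0 + w *\<^sub>R \<xi> s"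
  have "k * \<bar>s\<bar> \<le> v * (norm \<eta> + 2 * B)"
    by (rule approaching_parameter_le[where c=c and \<xi>=\<xi>, OF ot hit _ w bound[OF s] lower(2)[OF s]])
       (use v(1) in simp)
  also have "\<dots> \<le> v * C" using v(1) unfolding C_def by (intro mult_left_mono) auto
  finally have ks: "k * \<bar>s\<bar> \<le> v * C" .
  then have s_le: "\<bar>s\<bar> \<le> v * C / k" using lower(1) by (simp add: field_simps)
  have "v * C < k * \<delta>"
    using v(1,3) \<open>C \<ge> 0\<close> by (simp add: field_simps)
  with ks have "k * \<bar>s\<bar> < k * \<delta>" by linarith
  then have "\<bar>s\<bar> < \<delta>" using lower(1) by simp
  have "v * \<bar>\<eta> \<bullet> A M\<bar> = \<bar>A X \<bullet> A M\<bar>" using hit v(1) by (simp add: X_def abs_mult)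
  also have "\<dots> = \<bar>X \<bullet> M\<bar>" using ot by (simp add: orthogonal_transformation_def)
  also have "\<dots> \<le> r * (\<bar>s\<bar> + \<bar>w\<bar>) * norm M" using \<delta>(2)[OF s \<open>\<bar>s\<bar> < \<delta>\<close>] by (simp add: X_def)
  also have "\<dots> \<le> r * (v * C / k + 2 * v) * norm M"
    using s_le w \<open>r > 0\<close> by (intro mult_right_mono mult_left_mono add_mono) auto
  also have "\<dots> = v * (r * ((C / k + 2) * norm M))" by (simp add: algebra_simps)
  finally show "\<bar>\<eta> \<bullet> A M\<bar> \<le> r * ((C / k + 2) * norm M)" using v(1) by simp
qed

section \<open>Ruled strips\<close>

lemma open_contains_box:
  fixes U :: "(real \<times> real) set"
  assumes "open U" "(s,0) \<in> U"
  obtains r where "r > 0" "\<And>t w. \<bar>t - s\<bar> < r \<Longrightarrow> \<bar>w\<bar> < r \<Longrightarrow> (t,w) \<in> U"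
proof -
  obtain R where R: "R > 0" "ball (s,0) R \<subseteq> U" using assms open_contains_ball by blast
  have "(t,w) \<in> U" if "\<bar>t - s\<bar> < R/2" "\<bar>w\<bar> < R/2" for t w :: real
  proof -
    have "dist (s,0) (t,w) \<le> \<bar>dist s t\<bar> + \<bar>dist 0 w\<bar>"
      unfolding dist_Pair_Pair by (rule sqrt_sum_squares_le_sum_abs)
    also have "\<dots> < R" using that by (simp add: dist_real_def abs_minus_commute)
    finally show ?thesis using R(2) by auto
  qed
  then show ?thesis using that[of "R/2"] R(1) by simp
qed

lemma open_contains_strip:
  fixes U :: "(real \<times> real) set"
  assumes "open U" "compact K" "K \<times> {0} \<subseteq> U"
  obtains d where "d > 0" "\<And>s v. s \<in> K \<Longrightarrow> \<bar>v\<bar> < d \<Longrightarrow> (s,v) \<in> U"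
proof -
  obtain e where e: "e > 0" "(\<Union>x\<in>K \<times> {0}. ball x e) \<subseteq> U"
    using compact_subset_open_imp_ball_epsilon_subset[OF compact_Times[OF assms(2) compact_sing] assms(1,3)]
    by blast
  have "(s,v) \<in> ball (s,0) e" if "\<bar>v\<bar> < e" for s v :: real
    using that by (simp add: dist_Pair_Pair dist_real_def)
  then show ?thesis using that[of e] e by blast
qed

lemma ruled_map_partial_derivatives:
  fixes \<gamma> \<xi> :: "real \<Rightarrow> real^3"
  assumes "r > 0" and F: "\<And>t w. \<bar>t - s\<bar> < r \<Longrightarrow> \<bar>w\<bar> < r \<Longrightarrow> F (t,w) = \<gamma> t + w *\<^sub>R \<xi> t"
    and \<gamma>: "(\<gamma> has_vector_derivative \<gamma>') (at s)" and \<xi>: "(\<xi> has_vector_derivative \<xi>') (at s)"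
  shows "pd_s F (s,0) = \<gamma>'" "pd_v F (s,0) = \<xi> s"
    and "pd_v (pd_s F) (s,0) = \<xi>'" "pd_v (pd_v F) (s,0) = 0"
proof -
  have pd_s: "pd_s F (s,w) = \<gamma>' + w *\<^sub>R \<xi>'" if "\<bar>w\<bar> < r" for w
  proof -
    have "((\<lambda>t. \<gamma> t + w *\<^sub>R \<xi> t) has_vector_derivative \<gamma>' + w *\<^sub>R \<xi>') (at s)"
      using \<gamma> \<xi> by (auto intro!: derivative_eq_intros)
    then have "((\<lambda>t. F (t,w)) has_vector_derivative \<gamma>' + w *\<^sub>R \<xi>') (at s)"
      by (rule has_vector_derivative_transform_within_open[of _ _ s "ball s r"])
         (use \<open>r > 0\<close> F that in \<open>auto simp: dist_real_def abs_minus_commute\<close>)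
    then show ?thesis unfolding pd_s_def by (simp add: vector_derivative_at)
  qed
  have pd_v: "pd_v F (s,w) = \<xi> s" if "\<bar>w\<bar> < r" for w
  proof -
    have "((\<lambda>t. \<gamma> s + t *\<^sub>R \<xi> s) has_vector_derivative \<xi> s) (at w)"
      by (auto intro!: derivative_eq_intros)
    then have "((\<lambda>t. F (s,t)) has_vector_derivative \<xi> s) (at w)"
      by (rule has_vector_derivative_transform_within_open[of _ _ w "ball 0 r"])
         (use \<open>r > 0\<close> F that in \<open>auto simp: dist_real_def\<close>)
    then show ?thesis unfolding pd_v_def by (simp add: vector_derivative_at)
  qed
  show "pd_s F (s,0) = \<gamma>'" "pd_v F (s,0) = \<xi> s" using pd_s pd_v \<open>r > 0\<close> by simp_all
  have "((\<lambda>t. pd_s F (s,t)) has_vector_derivative \<xi>') (at 0)"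
    by (rule has_vector_derivative_transform_within_open[of "\<lambda>t. \<gamma>' + t *\<^sub>R \<xi>'" _ _ "ball 0 r"])
       (use \<open>r > 0\<close> pd_s in \<open>auto intro!: derivative_eq_intros simp: dist_real_def\<close>)
  then show "pd_v (pd_s F) (s,0) = \<xi>'" unfolding pd_v_def[of "pd_s F"] by (simp add: vector_derivative_at)
  have "((\<lambda>t. pd_v F (s,t)) has_vector_derivative 0) (at 0)"
    by (rule has_vector_derivative_transform_within_open[of "\<lambda>t. \<xi> s" _ _ "ball 0 r"])
       (use \<open>r > 0\<close> pd_v in \<open>auto simp: dist_real_def\<close>)
  then show "pd_v (pd_v F) (s,0) = 0" unfolding pd_v_def[of "pd_v F"] by (simp add: vector_derivative_at)
qed

lemma ruling_has_vector_derivative: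
  fixes \<gamma> \<xi> :: "real \<Rightarrow> real^3"
  assumes "0 < v" "v < r" and F: "\<And>t w. \<bar>t - s\<bar> < r \<Longrightarrow> \<bar>w\<bar> < r \<Longrightarrow> F (t,w) = \<gamma> t + w *\<^sub>R \<xi> t"
    and "\<gamma> differentiable (at s)" "(\<lambda>t. F (t,v)) differentiable (at s)"
  shows "(\<xi> has_vector_derivative vd \<xi> s) (at s)"
proof -
  have "((\<lambda>t. (1/v) *\<^sub>R (F (t,v) - \<gamma> t)) has_vector_derivative
      (1/v) *\<^sub>R (vd (\<lambda>t. F (t,v)) s - vd \<gamma> s)) (at s)"
    using assms(4,5) by (auto intro!: derivative_eq_intros has_vector_derivative_vd)
  then have "(\<xi> has_vector_derivative (1/v) *\<^sub>R (vd (\<lambda>t. F (t,v)) s - vd \<gamma> s)) (at s)"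
    by (rule has_vector_derivative_transform_within_open[of _ _ s "ball s r"])
       (use assms(1,2) F in \<open>auto simp: dist_real_def abs_minus_commute\<close>)
  then show ?thesis using vd_eqI by metis
qed

lemma ruling_developable_if_gauss_curv_eq_0:
  fixes \<gamma> \<xi> :: "real \<Rightarrow> real^3"
  assumes "r > 0" and F: "\<And>t w. \<bar>t - s\<bar> < r \<Longrightarrow> \<bar>w\<bar> < r \<Longrightarrow> F (t,w) = \<gamma> t + w *\<^sub>R \<xi> t"
    and \<gamma>: "(\<gamma> has_vector_derivative vd \<gamma> s) (at s)" and \<xi>: "(\<xi> has_vector_derivative vd \<xi> s) (at s)"
    and regular: "cross3 (pd_s F (s,0)) (pd_v F (s,0)) \<noteq> 0" and flat: "gauss_curv F (s,0) = 0"
  shows "vd \<xi> s \<bullet> cross3 (vd \<gamma> s) (\<xi> s) = 0"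
proof -
  note pd = ruled_map_partial_derivatives[OF \<open>r > 0\<close> F \<gamma> \<xi>]
  define X where "X = cross3 (vd \<gamma> s) (\<xi> s)"
  have "X \<noteq> 0" using regular by (simp add: pd X_def)
  have "- ((vd \<xi> s \<bullet> X)\<^sup>2) / norm X ^ 4 = 0"
    using flat unfolding gauss_curv_def Let_def by (simp add: pd X_def)
  then show ?thesis using \<open>X \<noteq> 0\<close> by (simp add: X_def)
qed

locale ruled_strip =
  fixes \<gamma> :: "real \<Rightarrow> real^3" and l :: real and \<alpha> \<beta> :: "real \<Rightarrow> real"
    and F :: "real \<times> real \<Rightarrow> real^3" and d :: real
  assumes width_pos: "d > 0"
    and curve_differentiable: "\<And>s. s \<in> param_int l \<Longrightarrow> \<gamma> differentiable (at s)"
    and strip_eq: "\<And>s v. s \<in> param_int l \<Longrightarrow> \<bar>v\<bar> < d \<Longrightarrow> F (s,v) = \<gamma> s + v *\<^sub>R ruling \<gamma> \<alpha> \<beta> s"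
    and angle_bounds: "\<And>s. s \<in> param_int l \<Longrightarrow> 0 < \<bar>\<alpha> s\<bar> \<and> \<bar>\<alpha> s\<bar> < pi/2 \<and> 0 < \<beta> s \<and> \<beta> s < pi"
    and ruling_derivative:
      "\<And>s. s \<in> param_int l \<Longrightarrow> (ruling \<gamma> \<alpha> \<beta> has_vector_derivative vd (ruling \<gamma> \<alpha> \<beta>) s) (at s)"
    and developable: "\<And>s. s \<in> param_int l \<Longrightarrow> vd (ruling \<gamma> \<alpha> \<beta>) s \<bullet> cross3 (vd \<gamma> s) (ruling \<gamma> \<alpha> \<beta> s) = 0"
begin

lemma sin_ruling_angle_pos: "s \<in> param_int l \<Longrightarrow> sin (\<beta> s) > 0"
  using angle_bounds sin_gt_zero by blast

lemma sin_first_angle_neq_0: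
  assumes "s \<in> param_int l"
  shows "sin (\<alpha> s) \<noteq> 0"
proof
  assume "sin (\<alpha> s) = 0"
  moreover have "-pi < \<alpha> s" "\<alpha> s < pi" "\<alpha> s \<noteq> 0" using angle_bounds[OF assms] by auto
  ultimately show False using sin_eq_0_pi by blast
qed

lemma continuous_on_ruling: "continuous_on (param_int l) (ruling \<gamma> \<alpha> \<beta>)"
  by (rule continuous_on_vector_derivative) (use ruling_derivative has_vector_derivative_at_within in blast)

lemma continuous_on_curve: "continuous_on (param_int l) \<gamma>"
  by (auto intro!: continuous_at_imp_continuous_on differentiable_imp_continuous_within curve_differentiable)

lemma ruling_bounded:
  obtains B where "\<And>s. s \<in> param_int l \<Longrightarrow> norm (ruling \<gamma> \<alpha> \<beta> s) \<le> B"
proof -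
  have "compact (param_int l)" by (simp add: param_int_def)
  from compact_imp_bounded[OF compact_continuous_image[OF continuous_on_ruling this]]
  show ?thesis using that unfolding bounded_iff by blast
qed

lemma mem_curve_if_mem_all_strips:
  assumes "e0 > 0" and mem: "\<And>\<epsilon>. 0 < \<epsilon> \<Longrightarrow> \<epsilon> < e0 \<Longrightarrow> x \<in> F ` Omega l \<epsilon>"
  shows "x \<in> \<gamma> ` param_int l"
proof -
  have compact_I: "compact (param_int l)" by (simp add: param_int_def)
  obtain B where B: "\<And>s. s \<in> param_int l \<Longrightarrow> norm (ruling \<gamma> \<alpha> \<beta> s) \<le> B"
    using ruling_bounded by blast
  have "\<exists>y\<in>\<gamma> ` param_int l. dist y x < e" if "e > 0" for e
  proof -
    obtain \<epsilon> where "0 < \<epsilon>" "\<epsilon> < min e0 d" "\<epsilon> < e / (\<bar>B\<bar> + 1)"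
      using field_lbound_gt_zero[of "min e0 d" "e / (\<bar>B\<bar> + 1)"] \<open>e0 > 0\<close> width_pos \<open>e > 0\<close> by auto
    moreover from this have "\<epsilon> * \<bar>B\<bar> < e"
      by (smt (verit, best) mult_left_mono abs_ge_zero pos_less_divide_eq)
    ultimately have \<epsilon>: "0 < \<epsilon>" "\<epsilon> < e0" "\<epsilon> < d" "\<epsilon> * \<bar>B\<bar> < e" by auto
    then obtain s v where s: "s \<in> param_int l" and v: "\<bar>v\<bar> < \<epsilon>" and x: "x = F (s,v)"
      using mem[OF \<epsilon>(1,2)] by (fastforce simp: Omega_def abs_less_iff)
    have "dist (\<gamma> s) x = \<bar>v\<bar> * norm (ruling \<gamma> \<alpha> \<beta> s)"
      using strip_eq[OF s] v \<epsilon>(3) by (simp add: x dist_norm)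
    also have "\<dots> \<le> \<epsilon> * \<bar>B\<bar>"
      using v B[OF s] by (intro mult_mono) auto
    finally show ?thesis using s \<epsilon>(4) by force
  qed
  then show ?thesis
    using closed_approachable[OF compact_imp_closed[OF compact_continuous_image[OF continuous_on_curve compact_I]]]
    by blast
qed

end

lemma normal_form_imp_ruled_strip:
  assumes nf: "normal_form \<gamma> l \<alpha> F" and \<gamma>: "\<And>s. s \<in> param_int l \<Longrightarrow> \<gamma> differentiable (at s)"
  obtains \<beta> d where "ruled_strip \<gamma> l \<alpha> \<beta> F d"
proof -
  obtain \<beta> U where U: "open U" "param_int l \<times> {0} \<subseteq> U" "smooth_surface_on U F"
    "\<And>p. p \<in> U \<Longrightarrow> cross3 (pd_s F p) (pd_v F p) \<noteq> 0" "\<And>p. p \<in> U \<Longrightarrow> gauss_curv F p = 0"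
    "\<And>s v. (s,v) \<in> U \<Longrightarrow> F (s,v) = \<gamma> s + v *\<^sub>R ruling \<gamma> \<alpha> \<beta> s"
    "\<And>s. s \<in> param_int l \<Longrightarrow> 0 < \<bar>\<alpha> s\<bar> \<and> \<bar>\<alpha> s\<bar> < pi/2 \<and> 0 < \<beta> s \<and> \<beta> s < pi"
    using nf unfolding normal_form_def by fast
  define \<xi> where "\<xi> = ruling \<gamma> \<alpha> \<beta>"
  obtain d where d: "d > 0" "\<And>s v. s \<in> param_int l \<Longrightarrow> \<bar>v\<bar> < d \<Longrightarrow> (s,v) \<in> U"
    using open_contains_strip[OF U(1) _ U(2)] by (auto simp: param_int_def)
  have "(\<xi> has_vector_derivative vd \<xi> s) (at s) \<and> vd \<xi> s \<bullet> cross3 (vd \<gamma> s) (\<xi> s) = 0"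
    if s: "s \<in> param_int l" for s
  proof -
    have "(s,0) \<in> U" using U(2) s by auto
    then obtain r where r: "r > 0" "\<And>t w. \<bar>t - s\<bar> < r \<Longrightarrow> \<bar>w\<bar> < r \<Longrightarrow> (t,w) \<in> U"
      using open_contains_box[OF U(1)] by blast
    have F: "F (t,w) = \<gamma> t + w *\<^sub>R \<xi> t" if "\<bar>t - s\<bar> < r" "\<bar>w\<bar> < r" for t w
      using U(6) r(2)[OF that] by (simp add: \<xi>_def)
    have "(s, r/2) \<in> U" using r by simp
    then have "(\<lambda>t. iter_pd [] F (t, r/2)) differentiable (at s)"
      using U(3) unfolding smooth_surface_on_def by fast
    then have "(\<lambda>t. F (t, r/2)) differentiable (at s)" by (simp add: iter_pd_def)
    then have \<xi>': "(\<xi> has_vector_derivative vd \<xi> s) (at s)"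
      using ruling_has_vector_derivative[of "r/2" r s F \<gamma> \<xi>] F r(1) \<gamma>[OF s] by simp
    have "vd \<xi> s \<bullet> cross3 (vd \<gamma> s) (\<xi> s) = 0"
      by (rule ruling_developable_if_gauss_curv_eq_0[OF r(1) F has_vector_derivative_vd[OF \<gamma>[OF s]] \<xi>'])
         (use U(4,5) \<open>(s,0) \<in> U\<close> in auto)
    with \<xi>' show ?thesis by blast
  qed
  then have "ruled_strip \<gamma> l \<alpha> \<beta> F d"
    using d U(6,7) \<gamma> by unfold_locales (auto simp: \<xi>_def)
  then show ?thesis by (rule that)
qed

section \<open>Frame identities\<close>

lemma bounded_bilinear_cross3: "bounded_bilinear cross3"
  using bilinear_conv_bounded_bilinear bilinear_cross by blast

lemma inner_cross3_coplanar_eq_0: "(a1 *\<^sub>R e + b1 *\<^sub>R w) \<bullet> cross3 e (a2 *\<^sub>R e + b2 *\<^sub>R w) = 0"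
  by (simp add: cross3_simps)

lemma coplanar_developable_rulings_identity:
  fixes e e' w d1 d2 :: "real^3"
  assumes x1: "x1 = c1 *\<^sub>R e + s1 *\<^sub>R w" and x2: "x2 = c2 *\<^sub>R e + s2 *\<^sub>R w"
    and "s1 \<noteq> 0" "s2 \<noteq> 0"
    and dev1: "d1 \<bullet> cross3 e x1 = 0" and dev2: "d2 \<bullet> cross3 e x2 = 0"
    and deriv: "d2 \<bullet> cross3 e x1 + x2 \<bullet> (cross3 e' x1 + cross3 e d1) = 0"
  shows "(c2 * s1 - s2 * c1) * (e \<bullet> cross3 e' w) = 0"
proof -
  have cross_e: "cross3 e (a *\<^sub>R e + b *\<^sub>R w) = b *\<^sub>R cross3 e w" for a b
    by (simp add: cross3_simps)
  have "d2 \<bullet> cross3 e w = 0" using dev2 \<open>s2 \<noteq> 0\<close> unfolding x2 cross_e by simp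
  then have "d2 \<bullet> cross3 e x1 = 0" unfolding x1 cross_e by simp
  moreover have "x2 \<bullet> cross3 e d1 = 0"
  proof -
    have "d1 \<bullet> cross3 e w = 0" using dev1 \<open>s1 \<noteq> 0\<close> unfolding x1 cross_e by simp
    moreover have "w \<bullet> cross3 e d1 = - (d1 \<bullet> cross3 e w)" by (simp add: cross3_simps)
    ultimately show ?thesis unfolding x2 by (simp add: inner_add_left dot_cross_self)
  qed
  moreover have "x2 \<bullet> cross3 e' x1 = (c2 * s1 - s2 * c1) * (e \<bullet> cross3 e' w)"
    unfolding x1 x2 by (simp add: cross3_simps)
  ultimately show ?thesis using deriv by (simp add: inner_add_right)
qed

lemma inner_cross3_curvature_normal:
  fixes e n :: "real^3"
  assumes "e \<bullet> n = 0" "norm e = 1" "norm n = 1"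
  shows "e \<bullet> cross3 (k *\<^sub>R n) (a *\<^sub>R n + b *\<^sub>R cross3 e n) = k * b"
proof -
  have "cross3 (k *\<^sub>R n) (a *\<^sub>R n + b *\<^sub>R cross3 e n) = (k * b) *\<^sub>R cross3 n (cross3 e n)"
    by (simp add: cross3_simps)
  also have "\<dots> = (k * b) *\<^sub>R e"
    using assms by (simp add: Lagrange inner_commute norm_eq_1)
  finally show ?thesis using assms(2) by (simp add: norm_eq_1)
qed

text \<open>With \<open>(e, n, e \<times> n)\<close> the Frenet frame of a curve, the left factor below is the ruling of the
  inverse normal form, built on the frame \<open>(-e, n, -(e \<times> n))\<close> of the reversed curve.\<close>

lemma inner_cross3_opposite_ruling:
  fixes e n :: "real^3" and A :: "real^3 \<Rightarrow> real^3"
  assumes "e \<bullet> n = 0" "norm e = 1" "norm n = 1"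
    and "linear A" "A n = n" "A (cross3 e n) = cross3 e n"
  shows "(cos b' *\<^sub>R (-e) + sin b' *\<^sub>R (cos a' *\<^sub>R n + sin a' *\<^sub>R (- cross3 e n)))
      \<bullet> A (cross3 e (cos b *\<^sub>R e + sin b *\<^sub>R (cos a *\<^sub>R n + sin a *\<^sub>R cross3 e n)))
     = - (sin b * sin b' * sin (a + a'))"
proof -
  define bn where "bn = cross3 e n"
  have "cross3 e bn = - n" unfolding bn_def Lagrange using assms(1,2) by (simp add: norm_eq_1)
  then have "cross3 e (cos b *\<^sub>R e + sin b *\<^sub>R (cos a *\<^sub>R n + sin a *\<^sub>R bn))
      = sin b *\<^sub>R (cos a *\<^sub>R bn - sin a *\<^sub>R n)"
    by (simp add: cross_add_right cross_mult_right bn_def[symmetric] algebra_simps)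
  then have A_cross: "A (cross3 e (cos b *\<^sub>R e + sin b *\<^sub>R (cos a *\<^sub>R n + sin a *\<^sub>R bn)))
      = sin b *\<^sub>R (cos a *\<^sub>R bn - sin a *\<^sub>R n)"
    using assms(4-6) unfolding bn_def by (simp add: linear_diff linear_cmul)
  have "e \<bullet> bn = 0" "n \<bullet> bn = 0" unfolding bn_def by (simp_all add: dot_cross_self)
  moreover have "bn \<bullet> bn = 1"
    using norm_cross_dot[of e n] assms(1-3) unfolding bn_def by (simp add: power2_norm_eq_inner)
  moreover have "n \<bullet> n = 1" using assms(3) by (simp add: norm_eq_1)
  ultimately show ?thesis unfolding bn_def[symmetric] A_cross using assms(1)
    by (simp add: inner_add_left inner_add_right inner_diff_right inner_commute sin_add algebra_simps)
qed

lemma eq_if_cos_eq_sgn_eq: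
  fixes a b :: real
  assumes "\<bar>a\<bar> < pi/2" "\<bar>b\<bar> < pi/2" "cos a = cos b" "sgn a = sgn b"
  shows "a = b"
proof -
  have "cos \<bar>a\<bar> = cos \<bar>b\<bar>" using assms(3) by simp
  moreover have "\<bar>a\<bar> \<le> pi" "\<bar>b\<bar> \<le> pi" using assms(1,2) pi_gt_zero by linarith+
  ultimately have "\<bar>a\<bar> = \<bar>b\<bar>" using cos_inj_pi[OF abs_ge_zero _ abs_ge_zero] by blast
  then show ?thesis using assms(4) by (metis sgn_mult_abs)
qed

lemma sin_add_neq_0_if_same_sgn:
  fixes a b :: real
  assumes "0 < \<bar>a\<bar>" "\<bar>a\<bar> < pi/2" "\<bar>b\<bar> < pi/2" "sgn b = sgn a"
  shows "sin (a + b) \<noteq> 0"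
proof
  assume "sin (a + b) = 0"
  moreover have "-pi < a + b" "a + b < pi" using assms(2,3) by linarith+
  ultimately have "b = -a" using sin_eq_0_pi by fastforce
  then show False using assms(1,4) by (simp add: sgn_minus sgn_zero_iff)
qed

lemma eq_if_sin_diff_eq_0:
  fixes a b :: real
  assumes "0 < a" "a < pi" "0 < b" "b < pi" "sin (a - b) = 0"
  shows "a = b"
  using sin_eq_0_pi[of "a - b"] assms by fastforce

section \<open>A normal form and its inverse\<close>

locale strip_and_inverse =
  F: ruled_strip c l \<alpha> \<beta>F F dF + G: ruled_strip "\<lambda>s. c (-s)" l \<alpha>G \<beta>G G dG
  for c l \<alpha> \<beta>F F dF \<alpha>G \<beta>G G dG +
  fixes U0 :: "real set"
  assumes l_pos: "l > 0"
    and U0: "open U0" "param_int l \<subseteq> U0"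
    and c_differentiable: "\<And>s. s \<in> U0 \<Longrightarrow> c differentiable (at s)"
    and vd_c_differentiable: "\<And>s. s \<in> U0 \<Longrightarrow> vd c differentiable (at s)"
    and unit_speed: "\<And>s. s \<in> param_int l \<Longrightarrow> norm (vd c s) = 1"
    and inj: "inj_on c (param_int l)"
    and curvature_nonzero: "\<And>s. s \<in> param_int l \<Longrightarrow> curvature c s \<noteq> 0"
    and nonplanar: "\<not> (\<exists>a d. a \<noteq> 0 \<and> (\<forall>s\<in>param_int l. a \<bullet> c s = d))"
    and inverse_angle: "\<And>s. s \<in> param_int l \<Longrightarrow>
      sgn (\<alpha>G s) = sgn (\<alpha> s) \<and> curvature c (-s) * cos (\<alpha>G s) = curvature c s * cos (\<alpha> s)"
begin

abbreviation "I \<equiv> param_int l"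
text \<open>Derivative arguments need an open set: they are carried out on the interior \<open>J\<close> of \<open>I\<close>.\<close>
abbreviation "J \<equiv> {-(l/2)<..<l/2}"
abbreviation "cr \<equiv> \<lambda>s. c (-s)"
abbreviation "\<xi>F \<equiv> ruling c \<alpha> \<beta>F"
abbreviation "\<xi>G \<equiv> ruling cr \<alpha>G \<beta>G"

lemma I_eq: "I = {-(l/2)..l/2}" by (simp add: param_int_def)
lemma minus_mem_I: "s \<in> I \<Longrightarrow> -s \<in> I" by (auto simp: I_eq)
lemma zero_mem_I: "0 \<in> I" using l_pos by (simp add: I_eq)
lemma zero_mem_J: "0 \<in> J" using l_pos by simp
lemma J_subset_I: "J \<subseteq> I" by (auto simp: I_eq)
lemma compact_I: "compact I" by (simp add: I_eq)

lemma has_vector_derivative_c: "s \<in> I \<Longrightarrow> (c has_vector_derivative vd c s) (at s)"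
  using U0(2) c_differentiable has_vector_derivative_vd by blast

lemma continuous_on_c: "continuous_on I c"
  by (rule continuous_on_vector_derivative) (use has_vector_derivative_c has_vector_derivative_at_within in blast)

lemma reversed_image: "cr ` I = c ` I"
  using minus_mem_I by (force simp: image_iff)

lemma vd_reversed: "t \<in> I \<Longrightarrow> vd cr t = - vd c (-t)"
  using vd_reflect c_differentiable U0(2) minus_mem_I by blast

lemma vd_vd_reversed: "t \<in> I \<Longrightarrow> vd (vd cr) t = vd (vd c) (-t)"
  using vd_vd_reflect[OF U0(1) _ c_differentiable vd_c_differentiable] U0(2) minus_mem_I by blast

lemma curvature_reversed: "t \<in> I \<Longrightarrow> curvature cr t = curvature c (-t)"
  unfolding curvature_def using vd_vd_reversed by simp

lemma frenet_reversed:
  assumes "t \<in> I"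
  shows "frenet_e cr t = - frenet_e c (-t)" "frenet_n cr t = frenet_n c (-t)"
    and "frenet_b cr t = - frenet_b c (-t)"
  using vd_reversed[OF assms] vd_vd_reversed[OF assms] curvature_reversed[OF assms]
  by (simp_all add: frenet_e_def frenet_n_def frenet_b_def)

lemma norm_frenet_n: "t \<in> I \<Longrightarrow> norm (frenet_n c t) = 1"
  using curvature_nonzero unfolding frenet_n_def curvature_def by simp

lemma vd_vd_c_eq: "t \<in> I \<Longrightarrow> vd (vd c) t = curvature c t *\<^sub>R frenet_n c t"
  using curvature_nonzero unfolding frenet_n_def curvature_def by simp

lemma frenet_e_orthogonal_n:
  assumes "t \<in> J"
  shows "frenet_e c t \<bullet> frenet_n c t = 0"
proof -
  have "t \<in> U0" using assms J_subset_I U0(2) by blast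
  then have "vd c t \<bullet> vd (vd c) t = 0"
    by (intro inner_vd_eq_0_if_unit[of J t "vd c"] assms vd_c_differentiable)
       (use unit_speed J_subset_I in auto)
  then show ?thesis unfolding frenet_e_def frenet_n_def by simp
qed

end

locale strip_motion = strip_and_inverse +
  fixes T A :: "real^3 \<Rightarrow> real^3"
  assumes orthogonal: "orthogonal_transformation A" and T_eq: "\<And>x. T x = A x + T 0"
begin

lemma linear_A: "linear A"
  using orthogonal by (simp add: orthogonal_transformation_def)

lemma linear_part_T: "(\<lambda>x. T x - T 0) = A"
proof
  fix x show "T x - T 0 = A x" using T_eq[of x] by simp
qed

lemma isometry: "isometry3 T"
  unfolding isometry3_def
proof (intro allI)
  fix x y
  have "dist (T x) (T y) = dist (A x) (A y)" using T_eq[of x] T_eq[of y] by simp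
  also have "\<dots> = dist x y" using orthogonal orthogonal_transformation_isometry by blast
  finally show "dist (T x) (T y) = dist x y" .
qed

lemma fixes_or_reverses_curve:
  assumes "T ` c ` I = c ` I"
  shows "(\<forall>s\<in>I. T (c s) = c s) \<or> (\<forall>s\<in>I. T (c s) = c (-s))"
  using isometry_onto_unit_speed_arc_id_or_reflect[of "l/2" c "vd c" T]
    has_vector_derivative_c unit_speed inj isometry assms
  unfolding isometry3_def I_eq by auto

lemma eq_id_if_fixes_curve: "(\<And>s. s \<in> I \<Longrightarrow> T (c s) = c s) \<Longrightarrow> T = id"
  using isometry3_fixing_nonplanar_eq_id[OF nonplanar zero_mem_I isometry] by blast

lemma reverses_derivatives:
  assumes reverses: "\<And>s. s \<in> I \<Longrightarrow> T (c s) = c (-s)" and "t \<in> J"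
  shows "vd cr t = A (vd c t)" "vd (vd cr) t = A (vd (vd c) t)"
proof -
  have J_U0: "s \<in> U0" if "s \<in> J" for s using that J_subset_I U0(2) by blast
  have "cr s = A (c s) + T 0" if "s \<in> J" for s
    using reverses[of s] T_eq[of "c s"] that J_subset_I by auto
  then have vd_cr: "vd cr s = A (vd c s)" if "s \<in> J" for s
    using vd_affine[OF _ that _ linear_A c_differentiable[OF J_U0[OF that]]] by simp
  then show "vd cr t = A (vd c t)" using \<open>t \<in> J\<close> .
  show "vd (vd cr) t = A (vd (vd c) t)"
    using vd_affine[of J t "vd cr" A "vd c" 0] vd_cr linear_A vd_c_differentiable[OF J_U0] \<open>t \<in> J\<close>
    by simp
qed

end

locale strip_congruence = strip_motion +
  fixes \<epsilon>0 :: real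
  assumes eps0_pos: "\<epsilon>0 > 0"
    and congruent: "\<And>\<epsilon>. 0 < \<epsilon> \<Longrightarrow> \<epsilon> < \<epsilon>0 \<Longrightarrow> T ` F ` Omega l \<epsilon> = G ` Omega l \<epsilon>"
begin

lemma maps_curve_onto_itself: "T ` c ` I = c ` I"
proof (intro subset_antisym subsetI)
  fix x assume "x \<in> T ` c ` I"
  then obtain s where s: "s \<in> I" and x: "x = T (F (s,0))"
    using F.strip_eq F.width_pos by auto
  have "x \<in> G ` Omega l \<epsilon>" if "0 < \<epsilon>" "\<epsilon> < \<epsilon>0" for \<epsilon>
    using congruent[OF that] s that(1) by (auto simp: x Omega_def)
  then have "x \<in> cr ` I" using G.mem_curve_if_mem_all_strips[OF eps0_pos] by blast
  then show "x \<in> c ` I" using reversed_image by simp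
next
  fix x assume "x \<in> c ` I"
  then obtain s where s: "s \<in> I" "x = c s" by blast
  have x: "x = G (-s, 0)" using G.strip_eq[OF minus_mem_I[OF s(1)]] G.width_pos s(2) by simp
  have x_mem: "x \<in> T ` F ` Omega l \<epsilon>" if "0 < \<epsilon>" "\<epsilon> < \<epsilon>0" for \<epsilon>
    using congruent[OF that] minus_mem_I[OF s(1)] that(1) by (force simp: x Omega_def)
  have "x \<in> T ` F ` Omega l (\<epsilon>0/2)" using x_mem eps0_pos by simp
  then obtain y where y: "x = T y" by blast
  have "y \<in> F ` Omega l \<epsilon>" if \<epsilon>: "0 < \<epsilon>" "\<epsilon> < \<epsilon>0" for \<epsilon>
  proof -
    obtain y' where "y' \<in> F ` Omega l \<epsilon>" "x = T y'" using x_mem[OF \<epsilon>] by blast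
    moreover have "y' = y" using \<open>x = T y'\<close> y isometry by (metis dist_eq_0_iff isometry3_def)
    ultimately show ?thesis by simp
  qed
  then have "y \<in> c ` I" using F.mem_curve_if_mem_all_strips[OF eps0_pos] by blast
  then show "x \<in> T ` c ` I" using y by blast
qed

lemma fixes_c0: "T (c 0) = c 0"
  using fixes_or_reverses_curve[OF maps_curve_onto_itself] zero_mem_I by auto

lemma ruling_in_tangent_plane: "\<xi>G 0 \<bullet> A (cross3 (vd c 0) (\<xi>F 0)) = 0"
proof -
  define v0 where "v0 = min dG (min dF \<epsilon>0) / 2"
  have "v0 > 0" using G.width_pos F.width_pos eps0_pos by (simp add: v0_def)
  have approach: "\<exists>s\<in>I. \<exists>w. \<bar>w\<bar> \<le> 2 * v \<and> A (c s - c 0 + w *\<^sub>R \<xi>F s) = v *\<^sub>R \<xi>G 0"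
    if v: "0 < v" "v < v0" for v
  proof -
    have "G (0,v) \<in> G ` Omega l (2 * v)" using v zero_mem_I by (auto simp: Omega_def)
    also have "\<dots> = T ` F ` Omega l (2 * v)" using congruent[of "2 * v"] v by (simp add: v0_def)
    finally obtain s w where s: "s \<in> I" and w: "\<bar>w\<bar> < 2 * v" and hit: "G (0,v) = T (F (s,w))"
      by (fastforce simp: Omega_def abs_less_iff)
    have "G (0,v) = c 0 + v *\<^sub>R \<xi>G 0"
      using G.strip_eq[OF zero_mem_I, of v] v by (simp add: v0_def)
    moreover have "T (F (s,w)) = A (c s + w *\<^sub>R \<xi>F s) + T 0"
      using F.strip_eq[OF s, of w] T_eq[of "F (s,w)"] w v by (simp add: v0_def)
    ultimately have "c 0 + v *\<^sub>R \<xi>G 0 = A (c s + w *\<^sub>R \<xi>F s) + T 0" using hit by simp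
    moreover have "c 0 = A (c 0) + T 0" using fixes_c0 T_eq[of "c 0"] by simp
    ultimately have "A (c s - c 0 + w *\<^sub>R \<xi>F s) = v *\<^sub>R \<xi>G 0"
      using linear_diff[OF linear_A] linear_add[OF linear_A]
      by (metis (no_types, lifting) add_diff_cancel_left' add_diff_cancel_right add_diff_eq)
    then show ?thesis using s w by force
  qed
  have cont: "continuous (at 0 within I) \<xi>F"
    using F.continuous_on_ruling zero_mem_I continuous_on_eq_continuous_within by blast
  obtain B where B: "\<And>s. s \<in> I \<Longrightarrow> norm (\<xi>F s) \<le> B" using F.ruling_bounded by blast
  obtain k where k: "k > 0" "\<And>s. s \<in> I \<Longrightarrow> k * \<bar>s\<bar> \<le> norm (c s - c 0)"
    using injective_unit_speed_linear_lower_bound[OF compact_I zero_mem_I continuous_on_c inj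
        has_vector_derivative_c[OF zero_mem_I] unit_speed[OF zero_mem_I]] by blast
  show ?thesis
    by (rule ruling_in_tangent_plane_if_approached[OF orthogonal \<open>v0 > 0\<close> approach
          has_vector_derivative_c[OF zero_mem_I] cont _ _ B k]) (simp_all add: dot_cross_self)
qed

lemma not_fixing_normal_and_binormal:
  assumes "A (frenet_n c 0) = frenet_n c 0" "A (frenet_b c 0) = frenet_b c 0"
  shows False
proof -
  define e n where "e = vd c 0" and "n = frenet_n c 0"
  have "e \<bullet> n = 0" using frenet_e_orthogonal_n[OF zero_mem_J] by (simp add: e_def n_def frenet_e_def)
  moreover have "norm e = 1" using unit_speed[OF zero_mem_I] by (simp add: e_def)
  moreover have "norm n = 1" using norm_frenet_n[OF zero_mem_I] by (simp add: n_def)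
  moreover have "A n = n" "A (cross3 e n) = cross3 e n"
    using assms by (simp_all add: e_def n_def frenet_b_def frenet_e_def)
  moreover have "\<xi>F 0 = cos (\<beta>F 0) *\<^sub>R e + sin (\<beta>F 0) *\<^sub>R (cos (\<alpha> 0) *\<^sub>R n + sin (\<alpha> 0) *\<^sub>R cross3 e n)"
    by (simp add: ruling_def e_def n_def frenet_b_def frenet_e_def)
  moreover have "\<xi>G 0 = cos (\<beta>G 0) *\<^sub>R (- e) + sin (\<beta>G 0) *\<^sub>R (cos (\<alpha>G 0) *\<^sub>R n + sin (\<alpha>G 0) *\<^sub>R (- cross3 e n))"
    using frenet_reversed[OF zero_mem_I] by (simp add: ruling_def e_def n_def frenet_b_def frenet_e_def)
  ultimately have "sin (\<beta>F 0) * sin (\<beta>G 0) * sin (\<alpha> 0 + \<alpha>G 0) = 0"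
    using ruling_in_tangent_plane inner_cross3_opposite_ruling[OF _ _ _ linear_A]
    by (simp add: e_def)
  moreover have "sin (\<beta>F 0) > 0" "sin (\<beta>G 0) > 0"
    using F.sin_ruling_angle_pos G.sin_ruling_angle_pos zero_mem_I by blast+
  ultimately have "sin (\<alpha> 0 + \<alpha>G 0) = 0" by simp
  then show False
    using sin_add_neq_0_if_same_sgn F.angle_bounds[OF zero_mem_I] G.angle_bounds[OF zero_mem_I]
      inverse_angle[OF zero_mem_I] by blast
qed

lemma positive_symmetry_exists: "\<exists>T. positive_symmetry T (c ` I)"
  using fixes_or_reverses_curve[OF maps_curve_onto_itself]
proof
  assume "\<forall>s\<in>I. T (c s) = c s"
  then have "T = id" using eq_id_if_fixes_curve by blast
  then have "A = id" using linear_part_T by auto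
  then show ?thesis using not_fixing_normal_and_binormal by simp
next
  assume reverses: "\<forall>s\<in>I. T (c s) = c (-s)"
  have "T \<noteq> id"
  proof
    assume "T = id"
    have "l/2 \<in> I" "-(l/2) \<in> I" using l_pos by (simp_all add: I_eq)
    moreover have "T (c (l/2)) = c (-(l/2))" using reverses \<open>l/2 \<in> I\<close> by blast
    ultimately have "c (l/2) = c (-(l/2))" using \<open>T = id\<close> by simp
    then show False using inj_onD[OF inj _ \<open>l/2 \<in> I\<close> \<open>-(l/2) \<in> I\<close>] l_pos by simp
  qed
  have "det (matrix A) > 0"
  proof (rule ccontr)
    assume "\<not> det (matrix A) > 0"
    then have det: "det (matrix A) = -1" using orthogonal_transformation_det[OF orthogonal] by linarith
    have Ae: "A (vd c 0) = - vd c 0"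
      using reverses_derivatives(1)[OF _ zero_mem_J] vd_reversed[OF zero_mem_I] reverses by simp
    have "A (vd (vd c) 0) = vd (vd c) 0"
      using reverses_derivatives(2)[OF _ zero_mem_J] vd_vd_reversed[OF zero_mem_I] reverses by simp
    then have An: "A (frenet_n c 0) = frenet_n c 0"
      unfolding frenet_n_def using linear_cmul[OF linear_A] by simp
    have "cross3 (A (vd c 0)) (A (frenet_n c 0)) = det (matrix A) *\<^sub>R A (cross3 (vd c 0) (frenet_n c 0))"
      by (rule cross_orthogonal_transformation[OF orthogonal])
    then have "A (frenet_b c 0) = frenet_b c 0"
      unfolding Ae An det by (simp add: frenet_b_def frenet_e_def)
    then show False using not_fixing_normal_and_binormal An by blast
  qed
  then have "positive_symmetry T (c ` I)"
    using isometry \<open>T \<noteq> id\<close> maps_curve_onto_itself linear_part_T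
    unfolding positive_symmetry_def by simp
  then show ?thesis by blast
qed

end

locale strip_symmetry = strip_motion +
  assumes symmetry: "positive_symmetry T (c ` param_int l)"
begin

lemma reverses_curve: "s \<in> I \<Longrightarrow> T (c s) = c (-s)"
  using fixes_or_reverses_curve eq_id_if_fixes_curve symmetry
  unfolding positive_symmetry_def by blast

lemma cross3_A: "cross3 (A x) (A y) = A (cross3 x y)"
proof -
  have "det (matrix A) = 1"
    using orthogonal_transformation_det[OF orthogonal] symmetry linear_part_T
    unfolding positive_symmetry_def by auto
  then show ?thesis using cross_orthogonal_transformation[OF orthogonal] by simp
qed

lemma bounded_linear_A: "bounded_linear A"
  using linear_A linear_conv_bounded_linear by blast

lemma reversed_frame:
  assumes "t \<in> J"
  shows "curvature cr t = curvature c t" "frenet_e cr t = A (frenet_e c t)"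
    and "frenet_n cr t = A (frenet_n c t)" "frenet_b cr t = A (frenet_b c t)"
proof -
  note rd = reverses_derivatives[OF reverses_curve assms]
  show "curvature cr t = curvature c t"
    unfolding curvature_def using rd(2) orthogonal_transformation_norm[OF orthogonal] by simp
  then show "frenet_e cr t = A (frenet_e c t)" "frenet_n cr t = A (frenet_n c t)"
    using rd linear_cmul[OF linear_A] by (simp_all add: frenet_e_def frenet_n_def)
  then show "frenet_b cr t = A (frenet_b c t)"
    by (simp add: frenet_b_def cross3_A \<open>frenet_e cr t = A (frenet_e c t)\<close>)
qed

lemma inverse_angle_eq: "t \<in> J \<Longrightarrow> \<alpha>G t = \<alpha> t"
proof -
  assume "t \<in> J"
  then have t: "t \<in> I" using J_subset_I by blast
  have "curvature c (-t) = curvature c t"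
    using curvature_reversed[OF t] reversed_frame(1)[OF \<open>t \<in> J\<close>] by simp
  then have "cos (\<alpha>G t) = cos (\<alpha> t)" using inverse_angle[OF t] curvature_nonzero[OF t] by simp
  then show "\<alpha>G t = \<alpha> t"
    using eq_if_cos_eq_sgn_eq F.angle_bounds[OF t] G.angle_bounds[OF t] inverse_angle[OF t] by blast
qed

lemma rulings_in_common_plane:
  assumes t: "t \<in> J"
  defines "W \<equiv> cos (\<alpha> t) *\<^sub>R frenet_n cr t + sin (\<alpha> t) *\<^sub>R frenet_b cr t"
  shows "A (\<xi>F t) = cos (\<beta>F t) *\<^sub>R vd cr t + sin (\<beta>F t) *\<^sub>R W"
    and "\<xi>G t = cos (\<beta>G t) *\<^sub>R vd cr t + sin (\<beta>G t) *\<^sub>R W"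
proof -
  have "A (\<xi>F t) = cos (\<beta>F t) *\<^sub>R A (frenet_e c t)
      + sin (\<beta>F t) *\<^sub>R (cos (\<alpha> t) *\<^sub>R A (frenet_n c t) + sin (\<alpha> t) *\<^sub>R A (frenet_b c t))"
    unfolding ruling_def using linear_A by (simp add: linear_add linear_cmul)
  then show "A (\<xi>F t) = cos (\<beta>F t) *\<^sub>R vd cr t + sin (\<beta>F t) *\<^sub>R W"
    using reversed_frame[OF t] by (simp add: W_def frenet_e_def)
  show "\<xi>G t = cos (\<beta>G t) *\<^sub>R vd cr t + sin (\<beta>G t) *\<^sub>R W"
    using inverse_angle_eq[OF t] by (simp add: W_def ruling_def frenet_e_def)
qed

lemma coplanarity_derivative:
  assumes "s \<in> J"
  shows "vd \<xi>G s \<bullet> cross3 (vd cr s) (A (\<xi>F s))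
    + \<xi>G s \<bullet> (cross3 (A (vd (vd c) s)) (A (\<xi>F s)) + cross3 (vd cr s) (A (vd \<xi>F s))) = 0"
proof -
  have sI: "s \<in> I" using assms J_subset_I by blast
  define f where "f t = \<xi>G t \<bullet> cross3 (vd cr t) (A (\<xi>F t))" for t
  have d_e: "(vd cr has_vector_derivative A (vd (vd c) s)) (at s)"
  proof (rule has_vector_derivative_transform_within_open[of "\<lambda>t. A (vd c t)" _ _ J])
    show "((\<lambda>t. A (vd c t)) has_vector_derivative A (vd (vd c) s)) (at s)"
      using bounded_linear.has_vector_derivative[OF bounded_linear_A
          has_vector_derivative_vd[OF vd_c_differentiable]] sI U0(2) by blast
  qed (use assms reverses_derivatives(1)[OF reverses_curve] in auto)
  have d_x: "((\<lambda>t. A (\<xi>F t)) has_vector_derivative A (vd \<xi>F s)) (at s)"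
    using bounded_linear.has_vector_derivative[OF bounded_linear_A F.ruling_derivative[OF sI]] .
  have "((\<lambda>t. cross3 (vd cr t) (A (\<xi>F t))) has_vector_derivative
      cross3 (vd cr s) (A (vd \<xi>F s)) + cross3 (A (vd (vd c) s)) (A (\<xi>F s))) (at s)"
    using bounded_bilinear.has_vector_derivative[OF bounded_bilinear_cross3 d_e d_x] .
  from bounded_bilinear.has_vector_derivative[OF bounded_bilinear_inner G.ruling_derivative[OF sI] this]
  have "(f has_vector_derivative \<xi>G s \<bullet> (cross3 (vd cr s) (A (vd \<xi>F s)) + cross3 (A (vd (vd c) s)) (A (\<xi>F s)))
      + vd \<xi>G s \<bullet> cross3 (vd cr s) (A (\<xi>F s))) (at s)"
    unfolding f_def .
  moreover have "(f has_vector_derivative 0) (at s)"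
  proof (rule has_vector_derivative_transform_within_open[of "\<lambda>t. 0" _ _ J])
    show "0 = f t" if "t \<in> J" for t
      unfolding f_def rulings_in_common_plane[OF that] by (rule inner_cross3_coplanar_eq_0[symmetric])
  qed (use assms in auto)
  ultimately show ?thesis using vector_derivative_unique_at by (simp add: add.commute)
qed

lemma inner_tangent_cross3_curvature:
  assumes s: "s \<in> J"
  shows "vd cr s \<bullet> cross3 (A (vd (vd c) s)) (cos (\<alpha> s) *\<^sub>R frenet_n cr s + sin (\<alpha> s) *\<^sub>R frenet_b cr s)
    = curvature c s * sin (\<alpha> s)"
proof -
  have sI: "s \<in> I" using s J_subset_I by blast
  define e n where "e = vd cr s" and "n = frenet_n cr s"
  have "A (vd (vd c) s) = curvature c s *\<^sub>R n"
    using vd_vd_c_eq[OF sI] reversed_frame(3)[OF s] linear_cmul[OF linear_A] by (simp add: n_def)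
  moreover have "e \<bullet> n = 0" "norm e = 1" "norm n = 1"
    using frenet_e_orthogonal_n[OF s] unit_speed[OF sI] norm_frenet_n[OF sI] orthogonal
      reversed_frame(2,3)[OF s] orthogonal_transformation_norm[OF orthogonal]
    by (auto simp: e_def n_def frenet_e_def orthogonal_transformation_def)
  ultimately show ?thesis
    using inner_cross3_curvature_normal by (simp add: e_def n_def frenet_b_def frenet_e_def)
qed

lemma ruling_angles_eq:
  assumes s: "s \<in> J"
  shows "\<beta>F s = \<beta>G s"
proof -
  have sI: "s \<in> I" using s J_subset_I by blast
  define e W where "e = vd cr s"
    and "W = cos (\<alpha> s) *\<^sub>R frenet_n cr s + sin (\<alpha> s) *\<^sub>R frenet_b cr s"
  have x1: "A (\<xi>F s) = cos (\<beta>F s) *\<^sub>R e + sin (\<beta>F s) *\<^sub>R W"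
    and x2: "\<xi>G s = cos (\<beta>G s) *\<^sub>R e + sin (\<beta>G s) *\<^sub>R W"
    using rulings_in_common_plane[OF s] by (simp_all add: W_def e_def)
  have sin_\<beta>: "sin (\<beta>F s) \<noteq> 0" "sin (\<beta>G s) \<noteq> 0"
    using F.sin_ruling_angle_pos[OF sI] G.sin_ruling_angle_pos[OF sI] by simp_all
  have "A (vd \<xi>F s) \<bullet> cross3 e (A (\<xi>F s)) = 0"
    using F.developable[OF sI] orthogonal
    by (simp add: e_def reverses_derivatives(1)[OF reverses_curve s] cross3_A orthogonal_transformation_def)
  from coplanar_developable_rulings_identity[OF x1 x2 sin_\<beta> this G.developable[OF sI, folded e_def]
      coplanarity_derivative[OF s, folded e_def]]
  have "(cos (\<beta>G s) * sin (\<beta>F s) - sin (\<beta>G s) * cos (\<beta>F s)) * (curvature c s * sin (\<alpha> s)) = 0"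
    using inner_tangent_cross3_curvature[OF s] by (simp add: e_def W_def)
  then have "sin (\<beta>F s - \<beta>G s) = 0"
    using curvature_nonzero[OF sI] F.sin_first_angle_neq_0[OF sI] by (simp add: sin_diff algebra_simps)
  then show ?thesis using eq_if_sin_diff_eq_0 F.angle_bounds[OF sI] G.angle_bounds[OF sI] by blast
qed

lemma maps_ruling:
  assumes "s \<in> I"
  shows "A (\<xi>F s) = \<xi>G s"
proof -
  have closure_J: "closure J = I" using l_pos by (simp add: I_eq)
  have "continuous_on I (\<lambda>s. A (\<xi>F s))"
    by (rule continuous_on_compose2[OF linear_continuous_on[OF bounded_linear_A] F.continuous_on_ruling]) auto
  then have "continuous_on (closure J) (\<lambda>s. A (\<xi>F s) - \<xi>G s)"
    unfolding closure_J by (intro continuous_on_diff G.continuous_on_ruling)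
  moreover have "A (\<xi>F t) - \<xi>G t = 0" if "t \<in> J" for t
    using rulings_in_common_plane[OF that] ruling_angles_eq[OF that] by simp
  ultimately have "A (\<xi>F s) - \<xi>G s = 0"
    by (rule continuous_constant_on_closure) (use assms closure_J in auto)
  then show ?thesis by simp
qed

lemma congruent: "congruent_small l F G"
proof -
  have "T (F p) = G p" if p: "p \<in> Omega l \<epsilon>" and \<epsilon>: "\<epsilon> \<le> min dF dG" for p \<epsilon>
  proof -
    obtain s v where p: "p = (s,v)" and s: "s \<in> I" and v: "\<bar>v\<bar> < dF" "\<bar>v\<bar> < dG"
      using p \<epsilon> by (cases p) (auto simp: Omega_def)
    have "T (F p) = A (F (s,v)) + T 0" using T_eq[of "F p"] p by simp
    also have "\<dots> = A (c s + v *\<^sub>R \<xi>F s) + T 0" using F.strip_eq[OF s v(1)] by simp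
    also have "\<dots> = (A (c s) + T 0) + v *\<^sub>R A (\<xi>F s)" using linear_A by (simp add: linear_add linear_cmul)
    also have "\<dots> = G p"
      using reverses_curve[OF s] T_eq[of "c s"] maps_ruling[OF s] G.strip_eq[OF s v(2)] p by simp
    finally show ?thesis .
  qed
  then have "T ` F ` Omega l \<epsilon> = G ` Omega l \<epsilon>" if "\<epsilon> < min dF dG" for \<epsilon>
    using that by (force simp: image_image intro!: image_cong)
  then show ?thesis
    unfolding congruent_small_def using isometry F.width_pos G.width_pos
    by (intro exI[of _ T] exI[of _ "min dF dG"]) auto
qed

end

context strip_and_inverse
begin

theorem congruent_small_iff_positive_symmetry:
  "congruent_small l F G \<longleftrightarrow> (\<exists>T. positive_symmetry T (c ` I))"
proof
  assume "congruent_small l F G"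
  then obtain T \<epsilon>0 where "isometry3 T \<and> \<epsilon>0 > 0
      \<and> (\<forall>\<epsilon>. 0 < \<epsilon> \<and> \<epsilon> < \<epsilon>0 \<longrightarrow> T ` F ` Omega l \<epsilon> = G ` Omega l \<epsilon>)"
    unfolding congruent_small_def by blast
  then interpret strip_congruence c l \<alpha> \<beta>F F dF \<alpha>G \<beta>G G dG U0 T "\<lambda>x. T x - T 0" \<epsilon>0
    using isometry3_orthogonal_transformation by unfold_locales auto
  show "\<exists>T. positive_symmetry T (c ` I)" by (rule positive_symmetry_exists)
next
  assume "\<exists>T. positive_symmetry T (c ` I)"
  then obtain T where "positive_symmetry T (c ` I)" by blast
  then interpret strip_symmetry c l \<alpha> \<beta>F F dF \<alpha>G \<beta>G G dG U0 T "\<lambda>x. T x - T 0"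
    using isometry3_orthogonal_transformation by unfold_locales (auto simp: positive_symmetry_def)
  show "congruent_small l F G" by (rule congruent)
qed

end

lemma normal_forms_imp_strip_and_inverse:
  assumes "l > 0" and U0: "open U0" "param_int l \<subseteq> U0" "smooth_curve_on U0 c"
    and "\<forall>s\<in>param_int l. norm (vd c s) = 1" "inj_on c (param_int l)"
    and "\<forall>s\<in>param_int l. curvature c s \<noteq> 0"
    and "\<not> (\<exists>a d. a \<noteq> 0 \<and> (\<forall>s\<in>param_int l. a \<bullet> c s = d))"
    and nf_F: "normal_form c l \<alpha> F" and nf_G: "normal_form (\<lambda>s. c (-s)) l \<alpha>G G"
    and "\<forall>s\<in>param_int l. sgn (\<alpha>G s) = sgn (\<alpha> s) \<and> curvature c (-s) * cos (\<alpha>G s) = curvature c s * cos (\<alpha> s)"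
  obtains \<beta>F dF \<beta>G dG where "strip_and_inverse c l \<alpha> \<beta>F F dF \<alpha>G \<beta>G G dG U0"
proof -
  have c_diff: "c differentiable (at s)" and vd_c_diff: "vd c differentiable (at s)" if "s \<in> U0" for s
  proof -
    have "(vd ^^ 0) c differentiable (at s)" "(vd ^^ 1) c differentiable (at s)"
      using U0(3) that unfolding smooth_curve_on_def by blast+
    then show "c differentiable (at s)" "vd c differentiable (at s)" by simp_all
  qed
  have "(\<lambda>s. c (-s)) differentiable (at s)" if "s \<in> param_int l" for s
  proof -
    have "-s \<in> U0" using that U0(2) by (auto simp: param_int_def)
    then show ?thesis
      using has_vector_derivative_reflect[OF has_vector_derivative_vd[OF c_diff]] differentiableI_vector by blast
  qed
  then obtain \<beta>G dG where G: "ruled_strip (\<lambda>s. c (-s)) l \<alpha>G \<beta>G G dG"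
    using normal_form_imp_ruled_strip[OF nf_G] by blast
  obtain \<beta>F dF where F: "ruled_strip c l \<alpha> \<beta>F F dF"
    using normal_form_imp_ruled_strip[OF nf_F] c_diff U0(2) by blast
  have "strip_and_inverse c l \<alpha> \<beta>F F dF \<alpha>G \<beta>G G dG U0"
    by (intro strip_and_inverse.intro strip_and_inverse_axioms.intro F G)
       (use assms c_diff vd_c_diff in auto)
  then show ?thesis by (rule that)
qed

theorem proposition4p6:
  fixes c :: "real \<Rightarrow> real^3" and l :: real
    and F :: "real \<times> real \<Rightarrow> real^3" and \<alpha> :: "real \<Rightarrow> real"
  assumes "l > 0"
    and "\<exists>U. open U \<and> param_int l \<subseteq> U \<and> smooth_curve_on U c"
    and "\<forall>s\<in>param_int l. norm (vd c s) = 1"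
    and "inj_on c (param_int l)"
    and "\<forall>s\<in>param_int l. curvature c s \<noteq> 0"
    and "\<not> (\<exists>a d. a \<noteq> 0 \<and> (\<forall>s\<in>param_int l. a \<bullet> c s = d))"
    and "normal_form c l \<alpha> F" and "admissible c l \<alpha>"
  shows "\<forall>G \<alpha>G. normal_form (\<lambda>s. c (-s)) l \<alpha>G G \<and> admissible (\<lambda>s. c (-s)) l \<alpha>G
            \<and> (\<forall>s\<in>param_int l. sgn (\<alpha>G s) = sgn (\<alpha> s)
                   \<and> curvature c (-s) * cos (\<alpha>G s) = curvature c s * cos (\<alpha> s))
          \<longrightarrow> (congruent_small l F G \<longleftrightarrow> (\<exists>T. positive_symmetry T (c ` param_int l)))"
proof (intro allI impI)
  fix G \<alpha>G
  assume "normal_form (\<lambda>s. c (-s)) l \<alpha>G G \<and> admissible (\<lambda>s. c (-s)) l \<alpha>G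
    \<and> (\<forall>s\<in>param_int l. sgn (\<alpha>G s) = sgn (\<alpha> s) \<and> curvature c (-s) * cos (\<alpha>G s) = curvature c s * cos (\<alpha> s))"
  moreover obtain U0 where "open U0" "param_int l \<subseteq> U0" "smooth_curve_on U0 c" using assms(2) by blast
  ultimately obtain \<beta>F dF \<beta>G dG where "strip_and_inverse c l \<alpha> \<beta>F F dF \<alpha>G \<beta>G G dG U0"
    using normal_forms_imp_strip_and_inverse[OF assms(1) _ _ _ assms(3-7)] by blast
  then show "congruent_small l F G \<longleftrightarrow> (\<exists>T. positive_symmetry T (c ` param_int l))"
    by (rule strip_and_inverse.congruent_small_iff_positive_symmetry)
qed

end
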